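(* Let $a\in\mathbb{R}_{<0}$ and let $(a_1,a_2)$ satisfy one of: $a_1=0$, $a_2\in\mathbb{R}_{<0}$; or $a_1=-1-x+iy$, $a_2=x+iy$ with $-1\le x<0$, $y\in\mathbb{R}_{>0}$; or $-1<a_1,a_2<0$. Let $V$ be the Hilbert tensor product of $N(a_1,a_2)$ and $N(a,0)$ (described in the context). If a simple lowest weight module $N(0,-\lambda)$, of lowest weight $\lambda$, is a Hilbert submodule of $V$, then $\lambda=a_1+a-a_2+2n_0$ for some integer $n_0$. Conversely: (1) if $a_1=0$, then for $n_0\in\mathbb{Z}$ the module $N(0,-a+a_2-2n_0)$, of lowest weight $a-a_2+2n_0$, is a Hilbert submodule of $V$ if and only if $1+a_2-a<2n_0\le0$; (2) if $a_1\neq0$, then for no integer $n_0$ does $V$ have a Hilbert submodule isomorphic to $N(0,-a_1-a+a_2-2n_0)$.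
   Context: $\mathfrak{sl}(2,\mathbb{C})$ has basis $H,E,F$ with $[H,E]=2E$, $[H,F]=-2F$, $[E,F]=H$. For $(c_1,c_2)\in\mathbb{C}^2$ let $\mathcal{K}(c_1,c_2)$ be the set of $k\in\mathbb{Z}$ such that for each $i$ with $c_i\in\mathbb{Z}$ one has ($c_i+(-1)^{i-1}k<0$ iff $c_i<0$). $N(c_1,c_2)$ has basis $\{x(k):k\in\mathcal{K}(c_1,c_2)\}$ ($x(k):=0$ otherwise), $H x(k)=(c_1-c_2+2k)x(k)$, and: (I) neither $c_i$ a negative integer: $E x(k)=(c_2-k)x(k+1)$, $F x(k)=(c_1+k)x(k-1)$; (II) only $c_2$ a negative integer: $E x(k)=x(k+1)$, $F x(k)=(c_1+k)(c_2-k+1)x(k-1)$; (III) only $c_1$ a negative integer: $E x(k)=(c_1+k+1)(c_2-k)x(k+1)$, $F x(k)=x(k-1)$; (IV) both: $E x(k)=(c_1+k+1)x(k+1)$, $F x(k)=(c_2-k+1)x(k-1)$. Hilbert structures: on $N(a_1,a_2)$ the $x(k)$ are orthogonal, $\|x(0)\|=1$, and for $k>0$: if $a_2$ is not a negative integer, $\|x(k)\|^2=\prod_{j=1}^k\frac{j+a_1}{j-1-\bar a_2}$ and (when $a_1\neq0$) $\|x(-k)\|^2=\prod_{j=1}^k\frac{j+\bar a_2}{j-1-a_1}$; if $a_1=0$ and $a_2\in\mathbb{Z}_{<0}$, $\|x(k)\|^2=k!\prod_{j=1}^k(j-1-a_2)$. On $N(a,0)$ put $y(l)=x(-l)$, $l\in\mathbb{Z}_{\ge0}$,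 orthogonal with $\|y(0)\|=1$ and $\|y(l)\|^2=l!/\prod_{j=1}^l(j-1-a)$ if $a\notin\mathbb{Z}$, $\|y(l)\|^2=l!\prod_{j=1}^l(j-1-a)$ if $a\in\mathbb{Z}$. With $z(k,l)=x(k)\otimes y(l)$, $V=\{\sum u_{k,l}z(k,l):\sum|u_{k,l}|^2\|x(k)\|^2\|y(l)\|^2<\infty\}$. $H,E,F$ act on formal sums $\sum u_{k,l}z(k,l)$ termwise via $X(v\otimes w)=Xv\otimes w+v\otimes Xw$. A $\mathfrak{sl}(2,\mathbb{C})$-module $M$ is a Hilbert submodule of $V$ if there is an injective module homomorphism from $M$ into the module of such formal sums with image contained in $V$. *)

theory Defs
  imports "HOL-Analysis.Analysis"
begin

datatype sl2 = H | E | F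

definition negint :: "complex \<Rightarrow> bool" where
  "negint c \<longleftrightarrow> c \<in> \<int> \<and> Re c < 0"

definition Kset :: "complex \<Rightarrow> complex \<Rightarrow> int set" where
  "Kset c1 c2 = {k. (c1 \<in> \<int> \<longrightarrow> (Re (c1 + of_int k) < 0 \<longleftrightarrow> Re c1 < 0)) \<and>
                    (c2 \<in> \<int> \<longrightarrow> (Re (c2 - of_int k) < 0 \<longleftrightarrow> Re c2 < 0))}"

text \<open>Coefficients: H x(k) = hN k x(k), E x(k) = eN k x(k+1), F x(k) = fN k x(k-1).\<close>
definition hN :: "complex \<Rightarrow> complex \<Rightarrow> int \<Rightarrow> complex" where
  "hN c1 c2 k = c1 - c2 + 2 * of_int k"

definition eN :: "complex \<Rightarrow> complex \<Rightarrow> int \<Rightarrow> complex" where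
  "eN c1 c2 k =
     (if \<not> negint c1 \<and> \<not> negint c2 then c2 - of_int k
      else if \<not> negint c1 \<and> negint c2 then 1
      else if negint c1 \<and> \<not> negint c2 then (c1 + of_int k + 1) * (c2 - of_int k)
      else c1 + of_int k + 1)"

definition fN :: "complex \<Rightarrow> complex \<Rightarrow> int \<Rightarrow> complex" where
  "fN c1 c2 k =
     (if \<not> negint c1 \<and> \<not> negint c2 then c1 + of_int k
      else if \<not> negint c1 \<and> negint c2 then (c1 + of_int k) * (c2 - of_int k + 1)
      else if negint c1 \<and> \<not> negint c2 then 1
      else c2 - of_int k + 1)"

text \<open>Elements of N(c1,c2): finitely supported coefficient functions on K(c1,c2)
  (v k is the coefficient of x(k)).\<close>
definition Nmod :: "complex \<Rightarrow> complex \<Rightarrow> (int \<Rightarrow> complex) set" where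
  "Nmod c1 c2 = {v. finite {k. v k \<noteq> 0} \<and> (\<forall>k. v k \<noteq> 0 \<longrightarrow> k \<in> Kset c1 c2)}"

text \<open>Action on N(c1,c2); x(j) := 0 for j outside K(c1,c2).\<close>
definition actN :: "sl2 \<Rightarrow> complex \<Rightarrow> complex \<Rightarrow> (int \<Rightarrow> complex) \<Rightarrow> (int \<Rightarrow> complex)" where
  "actN X c1 c2 v j =
     (if j \<in> Kset c1 c2 then
        (case X of
           H \<Rightarrow> hN c1 c2 j * v j
         | E \<Rightarrow> eN c1 c2 (j - 1) * v (j - 1)
         | F \<Rightarrow> fN c1 c2 (j + 1) * v (j + 1))
      else 0)"

text \<open>Formal sums \<Sum> u(k,l) z(k,l), z(k,l) = x(k) \<otimes> y(l), x(k) \<in> N(a1,a2), y(l) = x(-l) \<in> N(a,0).\<close>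
definition FS :: "complex \<Rightarrow> complex \<Rightarrow> (int \<times> nat \<Rightarrow> complex) set" where
  "FS a1 a2 = {u. \<forall>k l. k \<notin> Kset a1 a2 \<longrightarrow> u (k, l) = 0}"

text \<open>Termwise action X(v \<otimes> w) = Xv \<otimes> w + v \<otimes> Xw on formal sums.\<close>
definition actV :: "sl2 \<Rightarrow> complex \<Rightarrow> complex \<Rightarrow> real \<Rightarrow> (int \<times> nat \<Rightarrow> complex) \<Rightarrow> (int \<times> nat \<Rightarrow> complex)" where
  "actV X a1 a2 a u = (\<lambda>(k, l).
     (if k \<in> Kset a1 a2 then
        (case X of
           H \<Rightarrow> (hN a1 a2 k + hN (of_real a) 0 (- int l)) * u (k, l)
         | E \<Rightarrow> eN a1 a2 (k - 1) * u (k - 1, l)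
                + eN (of_real a) 0 (- int (l + 1)) * u (k, l + 1)
         | F \<Rightarrow> fN a1 a2 (k + 1) * u (k + 1, l)
                + (if l > 0 then fN (of_real a) 0 (- int (l - 1)) * u (k, l - 1) else 0))
      else 0))"

definition normsq_x :: "complex \<Rightarrow> complex \<Rightarrow> int \<Rightarrow> real" where
  "normsq_x a1 a2 k = Re
     (if k = 0 then 1
      else if k > 0 then
        (if \<not> negint a2 then (\<Prod>j=1..nat k. (of_nat j + a1) / (of_nat j - 1 - cnj a2))
         else fact (nat k) * (\<Prod>j=1..nat k. (of_nat j - 1 - a2)))
      else (\<Prod>j=1..nat (- k). (of_nat j + cnj a2) / (of_nat j - 1 - a1)))"

definition normsq_y :: "real \<Rightarrow> nat \<Rightarrow> real" where
  "normsq_y a l =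
     (if a \<notin> \<int> then fact l / (\<Prod>j=1..l. (real j - 1 - a))
      else fact l * (\<Prod>j=1..l. (real j - 1 - a)))"

definition Vspace :: "complex \<Rightarrow> complex \<Rightarrow> real \<Rightarrow> (int \<times> nat \<Rightarrow> complex) set" where
  "Vspace a1 a2 a = {u \<in> FS a1 a2.
     (\<lambda>(k, l). (cmod (u (k, l)))\<^sup>2 * normsq_x a1 a2 k * normsq_y a l) summable_on UNIV}"

definition hilbert_submodule :: "complex \<Rightarrow> complex \<Rightarrow> complex \<Rightarrow> complex \<Rightarrow> real \<Rightarrow> bool" where
  "hilbert_submodule c1 c2 a1 a2 a \<longleftrightarrow>
     (\<exists>\<phi>. (\<forall>v \<in> Nmod c1 c2. \<phi> v \<in> Vspace a1 a2 a)
        \<and> (\<forall>v \<in> Nmod c1 c2. \<forall>w \<in> Nmod c1 c2. \<phi> (\<lambda>k. v k + w k) = (\<lambda>p. \<phi> v p + \<phi> w p))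
        \<and> (\<forall>v \<in> Nmod c1 c2. \<forall>s. \<phi> (\<lambda>k. s * v k) = (\<lambda>p. s * \<phi> v p))
        \<and> (\<forall>X. \<forall>v \<in> Nmod c1 c2. \<phi> (actN X c1 c2 v) = actV X a1 a2 a (\<phi> v))
        \<and> inj_on \<phi> (Nmod c1 c2))"

end

theory Submission
  imports Defs
begin

text \<open>H is diagonal on the basis x(k) \<otimes> y(l), so every weight of V is a1 + a - a2 + 2n. If
  a1 \<noteq> 0, neither a1 nor a2 is an integer, every F-coefficient of N(a1,a2) is nonzero and F is
  injective on formal sums, so V contains no lowest weight vector at all. If a1 = 0 and a2 = r < 0,
  then after rescaling the basis vectors the action takes the generic form, and a lowest weight vector
  of weight a - r - 2m is a multiple of the vector with coefficients (m - a)_p / p! on the line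
  q = p + m. By Gauss' product formula the terms of its norm series, and of that of each E^k applied to
  it, are of order p^(2m + r - a), so these series converge exactly when 2m + r - a < -1; the
  normalised E-orbit then spans a copy of N(0, r + 2m - a).\<close>

section \<open>Growth of Pochhammer symbols\<close>

definition poch_ratio :: "real \<Rightarrow> nat \<Rightarrow> real" where
  "poch_ratio z n = pochhammer z n / (fact (n - 1) * real n powr z)"

lemma poch_ratio_LIMSEQ:
  fixes z :: real
  assumes z: "z > 0"
  shows "poch_ratio z \<longlonglongrightarrow> 1 / Gamma z"
proof -
  have "Gamma z \<noteq> 0" using Gamma_real_pos[OF z] by simp
  then have "(\<lambda>n. inverse (Gamma_series' z n)) \<longlonglongrightarrow> inverse (Gamma z)"
    by (intro tendsto_inverse Gamma_series'_LIMSEQ)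
  moreover have "\<forall>\<^sub>F n in sequentially. inverse (Gamma_series' z n) = poch_ratio z n"
    using eventually_gt_at_top[of "0::nat"]
    by eventually_elim (simp add: Gamma_series'_def poch_ratio_def powr_def field_simps)
  ultimately show ?thesis
    by (simp add: tendsto_cong divide_inverse)
qed

lemma pochhammer_div_fact_powr:
  assumes "n \<ge> 1" "z > 0"
  shows "pochhammer z n / fact n = poch_ratio z n * real n powr (z - 1)"
  using assms by (simp add: poch_ratio_def fact_reduce powr_diff field_simps)

lemma fact_div_pochhammer_powr:
  assumes "n \<ge> 1" "z > 0"
  shows "fact n / pochhammer z n = real n powr (1 - z) / poch_ratio z n"
proof -
  have "pochhammer z n > 0" using assms by (simp add: pochhammer_pos)
  then show ?thesis
    using assms by (simp add: poch_ratio_def fact_reduce powr_diff field_simps)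
qed

definition line_term :: "real \<Rightarrow> real \<Rightarrow> real \<Rightarrow> nat \<Rightarrow> nat \<Rightarrow> real" where
  "line_term s \<rho> \<alpha> m p =
     (pochhammer s p / fact p)^2 * (fact p / pochhammer \<rho> p) * (fact (m + p) / pochhammer \<alpha> (m + p))"

lemma line_term_nonneg:
  assumes "\<rho> > 0" "\<alpha> > 0"
  shows "line_term s \<rho> \<alpha> m p \<ge> 0"
  using assms unfolding line_term_def
  by (intro mult_nonneg_nonneg divide_nonneg_pos pochhammer_pos) auto

lemma line_term_asymp:
  fixes s \<rho> \<alpha> :: real
  assumes s: "s > 0" and rho: "\<rho> > 0" and al: "\<alpha> > 0"
  shows "(\<lambda>p. line_term s \<rho> \<alpha> m p / real p powr (2 * s - \<rho> - \<alpha>))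
           \<longlonglongrightarrow> (1 / Gamma s)^2 / ((1 / Gamma \<rho>) * (1 / Gamma \<alpha>))"
proof -
  have shift: "(\<lambda>p. real (m + p) / real p) \<longlonglongrightarrow> 1"
  proof -
    have "(\<lambda>p. 1 + real m / real p) \<longlonglongrightarrow> 1 + 0"
      by (intro tendsto_intros tendsto_divide_0[OF tendsto_const] filterlim_real_sequentially)
    moreover have "\<forall>\<^sub>F p in sequentially. 1 + real m / real p = real (m + p) / real p"
      using eventually_gt_at_top[of "0::nat"] by eventually_elim (simp add: field_simps)
    ultimately show ?thesis by (simp add: tendsto_cong)
  qed
  have "(\<lambda>p. poch_ratio s p ^ 2 / (poch_ratio \<rho> p * poch_ratio \<alpha> (m + p)) * (real (m + p) / real p) powr (1 - \<alpha>))
      \<longlonglongrightarrow> (1 / Gamma s)^2 / ((1 / Gamma \<rho>) * (1 / Gamma \<alpha>)) * 1 powr (1 - \<alpha>)"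
  proof (intro tendsto_intros poch_ratio_LIMSEQ s rho al shift)
    show "(\<lambda>p. poch_ratio \<alpha> (m + p)) \<longlonglongrightarrow> 1 / Gamma \<alpha>"
      using LIMSEQ_ignore_initial_segment[OF poch_ratio_LIMSEQ[OF al], of m] by (simp add: add.commute)
    show "1 / Gamma \<rho> * (1 / Gamma \<alpha>) \<noteq> 0"
      using Gamma_real_pos[OF rho] Gamma_real_pos[OF al] by simp
  qed simp
  moreover have "\<forall>\<^sub>F p in sequentially.
      poch_ratio s p ^ 2 / (poch_ratio \<rho> p * poch_ratio \<alpha> (m + p)) * (real (m + p) / real p) powr (1 - \<alpha>)
      = line_term s \<rho> \<alpha> m p / real p powr (2 * s - \<rho> - \<alpha>)"
    using eventually_gt_at_top[of "0::nat"]
  proof eventually_elim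
    case (elim p)
    have p1: "p \<ge> 1" "m + p \<ge> 1" using elim by auto
    have "line_term s \<rho> \<alpha> m p = (poch_ratio s p * real p powr (s - 1))^2 * (real p powr (1 - \<rho>) / poch_ratio \<rho> p)
              * (real (m + p) powr (1 - \<alpha>) / poch_ratio \<alpha> (m + p))"
      unfolding line_term_def pochhammer_div_fact_powr[OF p1(1) s]
        fact_div_pochhammer_powr[OF p1(1) rho] fact_div_pochhammer_powr[OF p1(2) al] ..
    also have "\<dots> = poch_ratio s p ^ 2 / (poch_ratio \<rho> p * poch_ratio \<alpha> (m + p)) * (real (m + p) / real p) powr (1 - \<alpha>)
          * real p powr (2 * s - \<rho> - \<alpha>)"
    proof -
      have pp: "real p powr (2 * s - \<rho> - \<alpha>)
          = real p powr (s - 1) * real p powr (s - 1) * real p powr (1 - \<rho>) * real p powr (1 - \<alpha>)"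
        by (simp add: powr_add[symmetric] algebra_simps)
      have q: "(real (m + p) / real p) powr (1 - \<alpha>) = real (m + p) powr (1 - \<alpha>) / real p powr (1 - \<alpha>)"
        using elim by (simp add: powr_divide)
      have "real p powr (1 - \<alpha>) > 0" using elim by simp
      then show ?thesis unfolding pp q by (simp add: power2_eq_square)
    qed
    finally show ?case using elim by simp
  qed
  ultimately show ?thesis by (simp add: tendsto_cong)
qed

lemma summable_iff_powr_asymp:
  fixes f :: "nat \<Rightarrow> real"
  assumes nn: "\<And>n. f n \<ge> 0" and lim: "(\<lambda>n. f n / real n powr A) \<longlonglongrightarrow> C" and C: "C > 0"
  shows "summable f \<longleftrightarrow> A < -1"
proof -
  have "\<forall>\<^sub>F n in sequentially. f n / real n powr A > C/2 \<and> f n / real n powr A < 2*C"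
    using lim C by (intro eventually_conj order_tendstoD) auto
  then obtain N where N: "\<And>n. n \<ge> N \<Longrightarrow> f n / real n powr A > C/2 \<and> f n / real n powr A < 2*C"
    by (auto simp: eventually_sequentially)
  have bnd: "C/2 * real n powr A \<le> f n \<and> f n \<le> 2*C * real n powr A" if "n \<ge> Suc N" for n
  proof -
    have "real n powr A > 0" using that by simp
    then show ?thesis using N[of n] that by (simp add: field_simps)
  qed
  show ?thesis
  proof
    assume "summable f"
    then have "summable (\<lambda>n. C/2 * real n powr A)"
      by (rule summable_comparison_test'[where N="Suc N"]) (use bnd C in auto)
    then show "A < -1" using C by (simp add: summable_real_powr_iff)
  next
    assume "A < -1"
    then have "summable (\<lambda>n. 2*C * real n powr A)" by (simp add: summable_real_powr_iff)
    then show "summable f"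
      by (rule summable_comparison_test'[where N="Suc N"]) (use bnd nn in auto)
  qed
qed

lemma summable_line_term_iff:
  assumes s: "s > 0" and rho: "\<rho> > 0" and al: "\<alpha> > 0"
  shows "summable (line_term s \<rho> \<alpha> m) \<longleftrightarrow> 2 * s - \<rho> - \<alpha> < -1"
proof (rule summable_iff_powr_asymp[OF _ line_term_asymp[OF s rho al]])
  show "0 < (1 / Gamma s)\<^sup>2 / (1 / Gamma \<rho> * (1 / Gamma \<alpha>))"
    using Gamma_real_pos[OF s] Gamma_real_pos[OF rho] Gamma_real_pos[OF al] by simp
qed (use line_term_nonneg rho al in auto)

section \<open>The generic action on coefficient arrays\<close>

text \<open>The formulas of case (I) for the tensor product of N(0,r) and N(a,0), written on coefficient
  arrays indexed by (p, q) for x(p) \<otimes> y(q). They describe V in all cases once the basis vectors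
  are rescaled by the products of case (II)/(III) coefficients; see rescale below.\<close>

definition genE :: "real \<Rightarrow> (int \<times> nat \<Rightarrow> complex) \<Rightarrow> int \<times> nat \<Rightarrow> complex" where
  "genE r u = (\<lambda>(p,q). (of_real r - of_int p + 1) * u (p - 1, q) + of_nat (Suc q) * u (p, Suc q))"

definition genF :: "real \<Rightarrow> (int \<times> nat \<Rightarrow> complex) \<Rightarrow> int \<times> nat \<Rightarrow> complex" where
  "genF a u = (\<lambda>(p,q). of_int (p + 1) * u (p + 1, q)
                 + (if q > 0 then (of_real a - of_nat q + 1) * u (p, q - 1) else 0))"

definition genH :: "real \<Rightarrow> real \<Rightarrow> (int \<times> nat \<Rightarrow> complex) \<Rightarrow> int \<times> nat \<Rightarrow> complex" where
  "genH r a u = (\<lambda>(p,q). (- of_real r + 2 * of_int p + of_real a - 2 * of_nat q) * u (p,q))"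

lemma genE_genF_comm: "genE r (genF a u) x - genF a (genE r u) x = genH r a u x"
proof (cases x)
  case (Pair p q)
  then show ?thesis
    by (cases q) (simp_all add: genE_def genF_def genH_def algebra_simps)
qed

lemma genH_genE_comm: "genH r a (genE r u) x - genE r (genH r a u) x = 2 * genE r u x"
  by (cases x) (simp add: genE_def genH_def algebra_simps)

lemma genE_zero: "genE r (\<lambda>_. 0) = (\<lambda>_. 0)"
  by (auto simp: genE_def)

lemma genE_scale: "genE r (\<lambda>x. c * u x) = (\<lambda>x. c * genE r u x)"
  by (auto simp: genE_def algebra_simps)

lemma genF_scale: "genF a (\<lambda>x. c * u x) = (\<lambda>x. c * genF a u x)"
  by (auto simp: genF_def algebra_simps)

lemma genH_scale: "genH r a (\<lambda>x. c * u x) = (\<lambda>x. c * genH r a u x)"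
  by (auto simp: genH_def algebra_simps)

lemma genE_sum: "genE r (\<lambda>x. \<Sum>k\<in>S. c k * W k x) = (\<lambda>x. \<Sum>k\<in>S. c k * genE r (W k) x)"
  by (intro ext, clarify) (simp add: genE_def sum_distrib_left sum.distrib distrib_left mult.left_commute)

lemma genF_sum: "genF a (\<lambda>x. \<Sum>k\<in>S. c k * W k x) = (\<lambda>x. \<Sum>k\<in>S. c k * genF a (W k) x)"
  by (intro ext, clarify) (simp add: genF_def sum_distrib_left sum.distrib distrib_left mult.left_commute)

lemma genH_sum: "genH r a (\<lambda>x. \<Sum>k\<in>S. c k * W k x) = (\<lambda>x. \<Sum>k\<in>S. c k * genH r a (W k) x)"
  by (intro ext, clarify) (simp add: genH_def sum_distrib_left mult.left_commute)

section \<open>The E-orbit of a lowest weight vector\<close>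

definition poch_frac :: "real \<Rightarrow> int \<Rightarrow> real" where
  "poch_frac s j = (if j < 0 then 0 else pochhammer s (nat j) / fact (nat j))"

lemma poch_frac_rec: "of_int j * poch_frac s j = (of_int j - 1 + s) * poch_frac s (j - 1)"
proof (cases "j \<ge> 1")
  case True
  define n where "n = nat (j - 1)"
  have n: "nat j = Suc n" "nat (j - 1) = n" "of_int j = real n + 1" using True by (simp_all add: n_def)
  have "(real n + 1) * (pochhammer s n * (s + real n) / ((real n + 1) * fact n))
        = pochhammer s n * (s + real n) / fact n"
    by simp
  then show ?thesis using n by (simp add: poch_frac_def pochhammer_Suc algebra_simps)
next
  case False
  then show ?thesis by (cases "j = 0") (auto simp: poch_frac_def)
qed

lemma poch_frac_nonneg: "s > 0 \<Longrightarrow> poch_frac s j \<ge> 0"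
  by (simp add: poch_frac_def pochhammer_nonneg)

lemma poch_frac_0 [simp]: "poch_frac s 0 = 1"
  by (simp add: poch_frac_def)

definition lw_vec :: "real \<Rightarrow> nat \<Rightarrow> int \<times> nat \<Rightarrow> complex" where
  "lw_vec a m = (\<lambda>(p,q). if int q = p + int m then of_real (poch_frac (real m - a) p) else 0)"

lemma genF_lw_vec: "genF a (lw_vec a m) = (\<lambda>_. 0)"
proof (intro ext, clarify)
  fix p :: int and q :: nat
  define s where "s = real m - a"
  have rec: "of_int (p + 1) * complex_of_real (poch_frac s (p + 1))
      = (of_int p + of_real s) * complex_of_real (poch_frac s p)"
    using arg_cong[OF poch_frac_rec[of "p + 1" s], of complex_of_real] by simp
  show "genF a (lw_vec a m) (p, q) = 0"
  proof (cases "int q = p + 1 + int m")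
    case True
    show ?thesis
    proof (cases q)
      case 0
      then have "poch_frac s p = 0" using True by (simp add: poch_frac_def)
      then show ?thesis using True 0 rec by (simp add: genF_def lw_vec_def s_def)
    next
      case (Suc q')
      then have "int q' = p + int m" using True by simp
      then have "(of_nat q' :: complex) = of_int p + of_nat m"
        by (metis of_int_add of_int_of_nat_eq)
      then show ?thesis using True Suc rec by (simp add: genF_def lw_vec_def s_def algebra_simps)
    qed
  qed (auto simp: genF_def lw_vec_def)
qed

lemma genH_lw_vec:
  "genH r a (lw_vec a m) x = complex_of_real (a - r - 2 * real m) * lw_vec a m x"
proof (cases x)
  case (Pair p q)
  show ?thesis
  proof (cases "int q = p + int m")
    case True
    then have "(of_nat q :: complex) = of_int p + of_nat m"
      by (metis of_int_add of_int_of_nat_eq)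
    then show ?thesis using Pair True by (simp add: genH_def lw_vec_def algebra_simps)
  qed (use Pair in \<open>simp add: genH_def lw_vec_def\<close>)
qed

definition orbit :: "real \<Rightarrow> real \<Rightarrow> nat \<Rightarrow> nat \<Rightarrow> int \<times> nat \<Rightarrow> complex" where
  "orbit r a m k = (genE r ^^ k) (lw_vec a m)"

lemma orbit_Suc: "orbit r a m (Suc k) = genE r (orbit r a m k)"
  by (simp add: orbit_def)

lemma genH_orbit:
  "genH r a (orbit r a m k) = (\<lambda>x. (complex_of_real (a - r - 2 * real m) + 2 * of_nat k) * orbit r a m k x)"
proof (induction k)
  case 0
  then show ?case by (auto simp: orbit_def genH_lw_vec)
next
  case (Suc k)
  show ?case
  proof
    fix x
    have "genH r a (orbit r a m (Suc k)) x = genE r (genH r a (orbit r a m k)) x + 2 * genE r (orbit r a m k) x"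
      using genH_genE_comm[of r a "orbit r a m k" x] by (simp add: orbit_Suc algebra_simps)
    also have "\<dots> = (complex_of_real (a - r - 2 * real m) + 2 * of_nat (Suc k)) * orbit r a m (Suc k) x"
      unfolding Suc genE_scale by (simp add: orbit_Suc algebra_simps)
    finally show "genH r a (orbit r a m (Suc k)) x
        = (complex_of_real (a - r - 2 * real m) + 2 * of_nat (Suc k)) * orbit r a m (Suc k) x" .
  qed
qed

lemma genF_orbit_0: "genF a (orbit r a m 0) = (\<lambda>_. 0)"
  by (simp add: orbit_def genF_lw_vec)

lemma genF_orbit_Suc:
  fixes r a :: real and m k :: nat
  defines "lam \<equiv> complex_of_real (a - r - 2 * real m)"
  shows "genF a (orbit r a m (Suc k)) = (\<lambda>x. - (of_nat (Suc k) * (lam + of_nat k)) * orbit r a m k x)"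
proof (induction k)
  case 0
  show ?case
  proof
    fix x
    have "genF a (orbit r a m (Suc 0)) x = genE r (genF a (orbit r a m 0)) x - genH r a (orbit r a m 0) x"
      using genE_genF_comm[of r a "orbit r a m 0" x] by (simp add: orbit_Suc algebra_simps)
    then show "genF a (orbit r a m (Suc 0)) x = - (of_nat (Suc 0) * (lam + of_nat 0)) * orbit r a m 0 x"
      using genF_orbit_0 genH_orbit[of r a m 0] by (simp add: genE_zero lam_def algebra_simps)
  qed
next
  case (Suc k)
  show ?case
  proof
    fix x
    have "genF a (orbit r a m (Suc (Suc k))) x
        = genE r (genF a (orbit r a m (Suc k))) x - genH r a (orbit r a m (Suc k)) x"
      using genE_genF_comm[of r a "orbit r a m (Suc k)" x] by (simp add: orbit_Suc algebra_simps)
    also have "\<dots> = - (of_nat (Suc k) * (lam + of_nat k)) * orbit r a m (Suc k) x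
        - (lam + 2 * of_nat (Suc k)) * orbit r a m (Suc k) x"
      unfolding Suc genE_scale genH_orbit lam_def by (simp only: orbit_Suc)
    also have "\<dots> = - (of_nat (Suc (Suc k)) * (lam + of_nat (Suc k))) * orbit r a m (Suc k) x"
      by (simp add: algebra_simps)
    finally show "genF a (orbit r a m (Suc (Suc k))) x
        = - (of_nat (Suc (Suc k)) * (lam + of_nat (Suc k))) * orbit r a m (Suc k) x" .
  qed
qed

lemma orbit_neg: "p < 0 \<Longrightarrow> orbit r a m k (p, q) = 0"
proof (induction k arbitrary: p q)
  case 0
  then show ?case by (simp add: orbit_def lw_vec_def poch_frac_def)
next
  case (Suc k)
  then show ?case by (simp add: orbit_Suc genE_def)
qed

lemma orbit_nonzero:
  assumes lam: "a - r - 2 * real m > 0"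
  shows "\<exists>p q. orbit r a m k (p,q) \<noteq> 0"
proof (induction k)
  case 0
  have "orbit r a m 0 (0, m) = 1" by (simp add: orbit_def lw_vec_def)
  then show ?case by (intro exI[of _ 0] exI[of _ m]) simp
next
  case (Suc k)
  then obtain p q where pq: "orbit r a m k (p,q) \<noteq> 0" by blast
  have "complex_of_real (a - r - 2 * real m) + of_nat k \<noteq> 0"
  proof
    assume "complex_of_real (a - r - 2 * real m) + of_nat k = 0"
    then have "Re (complex_of_real (a - r - 2 * real m) + of_nat k) = 0" by simp
    then show False using lam by simp
  qed
  then have c: "of_nat (Suc k) * (complex_of_real (a - r - 2 * real m) + of_nat k) \<noteq> 0"
    by (simp only: mult_eq_0_iff of_nat_eq_0_iff) simp
  show ?case
  proof (rule ccontr)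
    assume "\<not> ?case"
    then have "genF a (orbit r a m (Suc k)) (p,q) = 0" by (simp add: genF_def)
    then show False using genF_orbit_Suc[of a r m k] pq c by simp
  qed
qed

text \<open>Each E-step moves one unit down the anti-diagonals, and on the new line the coefficients
  are again combinations of shifted copies of poch_frac, by its recursion.\<close>

lemma poch_frac_step:
  assumes "int q + 1 = p + int m - int k"
  shows "(r - of_int p + 1) * poch_frac s (p - 1 - int i) + real (Suc q) * poch_frac s (p - int i)
       = (real m - real k + real i) * poch_frac s (p - int i) + (r + s - real i) * poch_frac s (p - int i - 1)"
proof -
  have q: "real (Suc q) = real m - real k + real i + of_int (p - int i)"
    using assms by simp
  have e: "p - 1 - int i = p - int i - 1" by simp
  show ?thesis unfolding q e using poch_frac_rec[of "p - int i" s] by (simp add: algebra_simps)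
qed

lemma orbit_expansion:
  fixes a :: real and m :: nat
  defines "s \<equiv> real m - a"
  shows "\<exists>c::nat \<Rightarrow> complex. \<forall>p q. orbit r a m k (p,q) =
     (if int q = p + int m - int k then (\<Sum>i\<le>k. c i * of_real (poch_frac s (p - int i))) else 0)"
proof (induction k)
  case 0
  show ?case by (rule exI[of _ "\<lambda>_. 1"]) (simp add: orbit_def lw_vec_def s_def)
next
  case (Suc k)
  then obtain c where c: "\<And>p q. orbit r a m k (p,q) =
     (if int q = p + int m - int k then (\<Sum>i\<le>k. c i * of_real (poch_frac s (p - int i))) else 0)"
    by blast
  define c' where "c' = (\<lambda>i. (if i \<le> k then c i * of_real (real m - real k + real i) else 0)
        + (if i = 0 then 0 else c (i - 1) * of_real (r + s - real (i - 1))))"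
  show ?case
  proof (rule exI[of _ c'], intro allI)
    fix p q
    show "orbit r a m (Suc k) (p,q) = (if int q = p + int m - int (Suc k)
        then (\<Sum>i\<le>Suc k. c' i * of_real (poch_frac s (p - int i))) else 0)"
    proof (cases "int q = p + int m - int (Suc k)")
      case True
      have l1: "int q = (p - 1) + int m - int k" and l2: "int (Suc q) = p + int m - int k"
        using True by simp_all
      have "orbit r a m (Suc k) (p,q)
          = (of_real r - of_int p + 1) * orbit r a m k (p - 1, q) + of_nat (Suc q) * orbit r a m k (p, Suc q)"
        by (simp add: orbit_Suc genE_def)
      also have "\<dots> = (\<Sum>i\<le>k. c i * of_real ((r - of_int p + 1) * poch_frac s (p - 1 - int i)
                                             + real (Suc q) * poch_frac s (p - int i)))"
        unfolding c using l1 l2 by (simp add: sum_distrib_left sum.distrib[symmetric] algebra_simps)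
      also have "\<dots> = (\<Sum>i\<le>k. c i * of_real ((real m - real k + real i) * poch_frac s (p - int i)
                                             + (r + s - real i) * poch_frac s (p - int i - 1)))"
        using poch_frac_step[of q p m k r s] True by simp
      also have "\<dots> = (\<Sum>i\<le>k. c i * of_real (real m - real k + real i) * of_real (poch_frac s (p - int i)))
                   + (\<Sum>i\<le>k. c i * of_real (r + s - real i) * of_real (poch_frac s (p - int (Suc i))))"
        by (simp add: sum.distrib[symmetric] algebra_simps)
      also have "\<dots> = (\<Sum>i\<le>Suc k. c' i * of_real (poch_frac s (p - int i)))"
      proof -
        have A: "(\<Sum>i\<le>Suc k. (if i \<le> k then c i * of_real (real m - real k + real i) else 0)
                               * complex_of_real (poch_frac s (p - int i)))
            = (\<Sum>i\<le>k. c i * of_real (real m - real k + real i) * of_real (poch_frac s (p - int i)))"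
          by (simp add: sum.atMost_Suc)
        have B: "(\<Sum>i\<le>Suc k. (if i = 0 then 0 else c (i - 1) * of_real (r + s - real (i - 1)))
                               * complex_of_real (poch_frac s (p - int i)))
            = (\<Sum>i\<le>k. c i * of_real (r + s - real i) * of_real (poch_frac s (p - int (Suc i))))"
          by (subst sum.atMost_Suc_shift) simp
        show ?thesis unfolding c'_def distrib_right sum.distrib A B ..
      qed
      finally show ?thesis using True by simp
    next
      case False
      then have "int q \<noteq> (p - 1) + int m - int k" "int (Suc q) \<noteq> p + int m - int k" by simp_all
      then show ?thesis using False by (simp add: orbit_Suc genE_def c)
    qed
  qed
qed

lemma poch_frac_pred_le:
  assumes s: "s > 0"
  shows "poch_frac s (j - 1) \<le> max 1 (1/s) * poch_frac s j"
proof (cases "j \<ge> 1")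
  case False
  then show ?thesis using poch_frac_nonneg[OF s, of j] by (simp add: poch_frac_def)
next
  case True
  define K where "K = max 1 (1/s)"
  have pos: "of_int j - 1 + s > 0" using True s by simp
  have jK: "of_int j \<le> K * (of_int j - 1 + s)"
  proof (cases "s \<ge> 1")
    case True
    then show ?thesis using s by (simp add: K_def)
  next
    case False
    have "of_int j - 1 \<le> (of_int j - 1) / s"
      using False s True by (simp add: divide_simps mult_left_le)
    then show ?thesis using False s by (simp add: K_def field_simps)
  qed
  have "(of_int j - 1 + s) * poch_frac s (j - 1) = of_int j * poch_frac s j"
    using poch_frac_rec[of j s] by simp
  also have "\<dots> \<le> (of_int j - 1 + s) * (K * poch_frac s j)"
    using mult_right_mono[OF jK poch_frac_nonneg[OF s, of j]] by (simp add: algebra_simps)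
  finally show ?thesis using pos unfolding K_def by simp
qed

lemma poch_frac_diff_le:
  assumes s: "s > 0"
  shows "poch_frac s (j - int i) \<le> max 1 (1/s) ^ i * poch_frac s j"
proof (induction i)
  case (Suc i)
  have "poch_frac s (j - int (Suc i)) = poch_frac s ((j - int i) - 1)" by (simp add: algebra_simps)
  also have "\<dots> \<le> max 1 (1/s) * poch_frac s (j - int i)" by (rule poch_frac_pred_le[OF s])
  also have "\<dots> \<le> max 1 (1/s) * (max 1 (1/s) ^ i * poch_frac s j)"
    using Suc by (intro mult_left_mono) auto
  finally show ?case by (simp add: algebra_simps)
qed simp

lemma orbit_bound:
  fixes a :: real and m :: nat
  assumes a: "a < 0"
  defines "s \<equiv> real m - a"
  shows "\<exists>C. \<forall>p q. cmod (orbit r a m k (p,q)) \<le> C * poch_frac s p"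
proof -
  have s0: "s > 0" using a by (simp add: s_def)
  obtain c where c: "\<And>p q. orbit r a m k (p,q) =
     (if int q = p + int m - int k then (\<Sum>i\<le>k. c i * of_real (poch_frac s (p - int i))) else 0)"
    using orbit_expansion unfolding s_def by blast
  define C where "C = (\<Sum>i\<le>k. cmod (c i) * max 1 (1/s) ^ i)"
  have C0: "C \<ge> 0" unfolding C_def by (intro sum_nonneg) auto
  have "cmod (orbit r a m k (p,q)) \<le> C * poch_frac s p" for p q
  proof (cases "int q = p + int m - int k")
    case True
    have "cmod (orbit r a m k (p,q)) \<le> (\<Sum>i\<le>k. cmod (c i * of_real (poch_frac s (p - int i))))"
      unfolding c using True by (simp add: norm_sum)
    also have "\<dots> = (\<Sum>i\<le>k. cmod (c i) * poch_frac s (p - int i))"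
      using poch_frac_nonneg[OF s0] by (simp add: norm_mult)
    also have "\<dots> \<le> (\<Sum>i\<le>k. cmod (c i) * (max 1 (1/s) ^ i * poch_frac s p))"
      by (intro sum_mono mult_left_mono poch_frac_diff_le[OF s0]) auto
    also have "\<dots> = C * poch_frac s p"
      unfolding C_def by (simp add: sum_distrib_right sum_distrib_left algebra_simps)
    finally show ?thesis .
  next
    case False
    then show ?thesis using C0 poch_frac_nonneg[OF s0, of p] by (simp add: c)
  qed
  then show ?thesis by blast
qed

section \<open>Norms in the generic case\<close>

definition gen_normsq :: "real \<Rightarrow> nat \<Rightarrow> real" where
  "gen_normsq r n = fact n / pochhammer (-r) n"

definition normsq_term :: "real \<Rightarrow> real \<Rightarrow> (int \<times> nat \<Rightarrow> complex) \<Rightarrow> int \<times> nat \<Rightarrow> real" where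
  "normsq_term r a u =
     (\<lambda>(p,q). if p \<ge> 0 then (cmod (u (p,q)))^2 * gen_normsq r (nat p) * gen_normsq a q else 0)"

lemma gen_normsq_pos: "r < 0 \<Longrightarrow> gen_normsq r n > 0"
  by (simp add: gen_normsq_def pochhammer_pos)

lemma normsq_term_nonneg: "r < 0 \<Longrightarrow> a < 0 \<Longrightarrow> normsq_term r a u x \<ge> 0"
  by (cases x) (auto simp: normsq_term_def intro!: mult_nonneg_nonneg less_imp_le[OF gen_normsq_pos])

lemma normsq_term_scale: "normsq_term r a (\<lambda>x. c * u x) = (\<lambda>x. (cmod c)^2 * normsq_term r a u x)"
  by (auto simp: normsq_term_def norm_mult power_mult_distrib)

lemma normsq_term_add_le:
  assumes r: "r < 0" and a: "a < 0"
  shows "normsq_term r a (\<lambda>x. u x + w x) x \<le> 2 * normsq_term r a u x + 2 * normsq_term r a w x"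
proof (cases x)
  case (Pair p q)
  have "(cmod (u x + w x))^2 \<le> (cmod (u x) + cmod (w x))^2"
    by (intro power_mono norm_triangle_ineq) auto
  also have "\<dots> \<le> 2 * (cmod (u x))^2 + 2 * (cmod (w x))^2"
    using sum_squares_ge_zero[of "cmod (u x) - cmod (w x)" 0]
    by (simp add: power2_eq_square algebra_simps)
  finally have "(cmod (u x + w x))^2 * (gen_normsq r (nat p) * gen_normsq a q)
      \<le> (2 * (cmod (u x))^2 + 2 * (cmod (w x))^2) * (gen_normsq r (nat p) * gen_normsq a q)"
    using gen_normsq_pos[OF r] gen_normsq_pos[OF a] by (intro mult_right_mono) (auto intro: less_imp_le)
  then show ?thesis using Pair by (simp add: normsq_term_def algebra_simps)
qed

lemma normsq_term_sum_summable:
  assumes r: "r < 0" and a: "a < 0" and fin: "finite S"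
    and sW: "\<And>k. k \<in> S \<Longrightarrow> normsq_term r a (W k) summable_on UNIV"
  shows "normsq_term r a (\<lambda>x. \<Sum>k\<in>S. c k * W k x) summable_on UNIV"
  using fin sW
proof (induction S rule: finite_induct)
  case empty
  have "normsq_term r a (\<lambda>x. \<Sum>k\<in>{}. c k * W k x) = (\<lambda>_. 0)" by (auto simp: normsq_term_def)
  then show ?case by simp
next
  case (insert k S)
  have "normsq_term r a (\<lambda>x. \<Sum>k\<in>S. c k * W k x) summable_on UNIV"
    and "normsq_term r a (\<lambda>x. c k * W k x) summable_on UNIV"
    unfolding normsq_term_scale using insert by (auto intro: summable_on_cmult_right)
  then have "(\<lambda>x. 2 * normsq_term r a (\<lambda>x. c k * W k x) x
                + 2 * normsq_term r a (\<lambda>x. \<Sum>k\<in>S. c k * W k x) x) summable_on UNIV"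
    by (intro summable_on_add summable_on_cmult_right)
  moreover have "(\<lambda>x. \<Sum>k\<in>insert k S. c k * W k x) = (\<lambda>x. c k * W k x + (\<Sum>k\<in>S. c k * W k x))"
    using insert by simp
  ultimately show ?case
    by (auto intro: summable_on_comparison_test normsq_term_add_le[OF r a] normsq_term_nonneg[OF r a])
qed

lemma gen_normsq_le_Suc:
  assumes a: "a < 0"
  shows "gen_normsq a l \<le> max 1 (-a) * gen_normsq a (Suc l)"
proof -
  have la: "real l - a > 0" using a by simp
  have eq: "gen_normsq a (Suc l) = gen_normsq a l * (real l + 1) / (real l - a)"
    unfolding gen_normsq_def using a la by (simp add: pochhammer_Suc pochhammer_pos field_simps)
  have "real l - a \<le> max 1 (-a) * (real l + 1)"
  proof (cases "-a \<le> 1")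
    case False
    then have "real l * (1 + a) \<le> 0" by (intro mult_nonneg_nonpos) auto
    then show ?thesis using False by (simp add: algebra_simps)
  qed simp
  then have "gen_normsq a l * (real l - a) \<le> gen_normsq a l * (max 1 (-a) * (real l + 1))"
    using gen_normsq_pos[OF a, of l] by (intro mult_left_mono) auto
  then show ?thesis unfolding eq using la by (simp add: field_simps)
qed

lemma gen_normsq_le_add:
  assumes a: "a < 0"
  shows "gen_normsq a l \<le> max 1 (-a) ^ d * gen_normsq a (l + d)"
proof (induction d)
  case (Suc d)
  have "gen_normsq a l \<le> max 1 (-a) ^ d * gen_normsq a (l + d)" by (rule Suc)
  also have "\<dots> \<le> max 1 (-a) ^ d * (max 1 (-a) * gen_normsq a (Suc (l + d)))"
    by (intro mult_left_mono gen_normsq_le_Suc[OF a]) auto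
  finally show ?case by (simp add: algebra_simps)
qed simp

lemma summable_on_line:
  fixes g :: "nat \<Rightarrow> real"
  assumes nn: "\<And>n. g n \<ge> 0" and sg: "summable g"
  shows "(\<lambda>(p,q). if p \<ge> 0 \<and> int q = p + d then g (nat p) else 0) summable_on (UNIV :: (int \<times> nat) set)"
proof -
  define \<iota> where "\<iota> = (\<lambda>n::nat. (int n, nat (int n + d)))"
  define A where "A = {n::nat. int n + d \<ge> 0}"
  define D where "D = (\<lambda>(p,q). if p \<ge> 0 \<and> int q = p + d then g (nat p) else (0::real))"
  have inj: "inj_on \<iota> A" by (auto simp: \<iota>_def inj_on_def)
  have "g summable_on A"
    using summable_on_UNIV_nonneg_real_iff[of g] nn sg summable_on_subset_banach by blast
  moreover have "\<And>n. n \<in> A \<Longrightarrow> (D \<circ> \<iota>) n = g n" by (auto simp: D_def \<iota>_def A_def)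
  ultimately have "(D \<circ> \<iota>) summable_on A" using summable_on_cong by metis
  then have "D summable_on (\<iota> ` A)" by (simp add: summable_on_reindex[OF inj])
  moreover have "D x = 0" if "x \<in> UNIV - \<iota> ` A" for x
  proof (rule ccontr)
    obtain p q where pq: "x = (p,q)" by (cases x)
    assume "D x \<noteq> 0"
    then have "p \<ge> 0" "int q = p + d" using pq by (auto simp: D_def split: if_splits)
    then have "x = \<iota> (nat p)" "nat p \<in> A" using pq by (auto simp: \<iota>_def A_def)
    then show False using that by auto
  qed
  ultimately have "D summable_on UNIV"
    using summable_on_cong_neutral[of UNIV "\<iota> ` A" D D] by auto
  then show ?thesis unfolding D_def .
qed

lemma line_term_gen_normsq:
  "line_term s (-r) (-a) m p = (pochhammer s p / fact p)^2 * gen_normsq r p * gen_normsq a (m + p)"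
  by (simp add: line_term_def gen_normsq_def)

lemma orbit_summable:
  assumes a: "a < 0" and r: "r < 0" and cond: "2 * real m + r - a < -1"
  shows "normsq_term r a (orbit r a m k) summable_on UNIV"
proof -
  define s where "s = real m - a"
  have s0: "s > 0" using a by (simp add: s_def)
  define T where "T = line_term s (-r) (-a) m"
  have sT: "summable T"
    unfolding T_def using summable_line_term_iff[of s "-r" "-a" m] s0 a r cond by (simp add: s_def)
  have T0: "\<And>n. T n \<ge> 0" unfolding T_def using line_term_nonneg a r by simp
  obtain C where C: "\<And>p q. cmod (orbit r a m k (p,q)) \<le> C * poch_frac s p"
    using orbit_bound[OF a] unfolding s_def by blast
  obtain c where c: "\<And>p q. orbit r a m k (p,q) =
     (if int q = p + int m - int k then (\<Sum>i\<le>k. c i * of_real (poch_frac s (p - int i))) else 0)"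
    using orbit_expansion unfolding s_def by blast
  define K where "K = max 1 (-a) ^ k"
  define D where "D = (\<lambda>(p,q). if p \<ge> 0 \<and> int q = p + (int m - int k) then T (nat p) else (0::real))"
  have "D summable_on UNIV" unfolding D_def by (rule summable_on_line[OF T0 sT])
  then have sD: "(\<lambda>x. C^2 * K * D x) summable_on UNIV" by (intro summable_on_cmult_right)
  show ?thesis
  proof (rule summable_on_comparison_test[OF sD])
    fix x :: "int \<times> nat"
    show "0 \<le> normsq_term r a (orbit r a m k) x" by (rule normsq_term_nonneg[OF r a])
    obtain p q where x: "x = (p,q)" by (cases x)
    have "normsq_term r a (orbit r a m k) (p,q) \<le> C^2 * K * D (p,q)"
    proof (cases "p \<ge> 0 \<and> int q = p + (int m - int k)")
      case False
      then show ?thesis by (auto simp: normsq_term_def D_def c)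
    next
      case True
      have c1: "(cmod (orbit r a m k (p,q)))^2 \<le> (C * poch_frac s p)^2"
        using C[of p q] by (intro power_mono) auto
      have "q + k = m + nat p" using True by linarith
      then have ny: "gen_normsq a q \<le> K * gen_normsq a (m + nat p)"
        unfolding K_def by (metis gen_normsq_le_add[OF a])
      have "normsq_term r a (orbit r a m k) (p,q)
          = (cmod (orbit r a m k (p,q)))^2 * gen_normsq r (nat p) * gen_normsq a q"
        using True by (simp add: normsq_term_def)
      also have "\<dots> \<le> (C * poch_frac s p)^2 * gen_normsq r (nat p) * (K * gen_normsq a (m + nat p))"
        using gen_normsq_pos[OF r, of "nat p"] gen_normsq_pos[OF a, of q] c1 ny
        by (intro mult_mono) (auto intro: less_imp_le)
      also have "\<dots> = C^2 * K * T (nat p)"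
        using True by (simp add: T_def line_term_gen_normsq poch_frac_def power_mult_distrib power_divide)
      also have "\<dots> = C^2 * K * D (p,q)" using True by (simp add: D_def)
      finally show ?thesis .
    qed
    then show "normsq_term r a (orbit r a m k) x \<le> C^2 * K * D x" using x by simp
  qed
qed

lemma lw_vec_summable_imp:
  assumes a: "a < 0" and r: "r < 0" and su: "normsq_term r a (lw_vec a m) summable_on UNIV"
  shows "2 * real m + r - a < -1"
proof -
  define s where "s = real m - a"
  have s0: "s > 0" using a by (simp add: s_def)
  define \<iota> where "\<iota> = (\<lambda>n::nat. (int n, m + n))"
  have inj: "inj_on \<iota> UNIV" by (auto simp: \<iota>_def inj_on_def)
  have "normsq_term r a (lw_vec a m) summable_on range \<iota>"
    by (rule summable_on_subset_banach[OF su]) auto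
  then have "(normsq_term r a (lw_vec a m) \<circ> \<iota>) summable_on UNIV"
    by (simp add: summable_on_reindex[OF inj])
  moreover have "normsq_term r a (lw_vec a m) \<circ> \<iota> = line_term s (-r) (-a) m"
  proof
    fix n
    have "cmod (complex_of_real (pochhammer s n) / fact n) = pochhammer s n / fact n"
      using s0 by (simp add: norm_divide abs_of_nonneg pochhammer_nonneg)
    then show "(normsq_term r a (lw_vec a m) \<circ> \<iota>) n = line_term s (-r) (-a) m n"
      by (simp add: \<iota>_def normsq_term_def lw_vec_def line_term_gen_normsq poch_frac_def
          s_def[symmetric] power_divide)
  qed
  ultimately have "summable (line_term s (-r) (-a) m)"
    using summable_on_UNIV_nonneg_real_iff line_term_nonneg a r by (metis neg_0_less_iff_less)
  then show ?thesis using summable_line_term_iff[of s "-r" "-a" m] s0 a r by (simp add: s_def)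
qed

section \<open>Rescaling to the module V\<close>

lemma negint_real: "negint (complex_of_real x) \<longleftrightarrow> x \<in> \<int> \<and> x < 0"
  by (simp add: negint_def)

lemma negint_zero: "\<not> negint 0"
  by (simp add: negint_def)

lemma Kset_0_neg: "r < 0 \<Longrightarrow> Kset 0 (complex_of_real r) = {k. k \<ge> 0}"
  by (auto simp: Kset_def)

text \<open>For integral r the basis of N(0,r) or N(r,0) is rescaled by the products of the coefficients
  r - i of case (II) or (III); this turns all actions into the generic ones of genE, genF, genH.\<close>

definition iscale :: "real \<Rightarrow> nat \<Rightarrow> complex" where
  "iscale r n = (if r \<in> \<int> then (\<Prod>i<n. (complex_of_real r - of_nat i)) else 1)"

definition rescale :: "real \<Rightarrow> real \<Rightarrow> (int \<times> nat \<Rightarrow> complex) \<Rightarrow> int \<times> nat \<Rightarrow> complex" where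
  "rescale r a u = (\<lambda>(p,q). if p \<ge> 0 then u (p,q) / (iscale r (nat p) * iscale a q) else 0)"

lemma of_real_minus_of_int_nonzero:
  assumes "r < 0" "k \<ge> 0"
  shows "complex_of_real r - of_int k \<noteq> 0"
proof
  assume "complex_of_real r - of_int k = 0"
  then have "Re (complex_of_real r - of_int k) = 0" by simp
  then show False using assms by simp
qed

lemma iscale_nonzero:
  assumes "r < 0" shows "iscale r n \<noteq> 0"
  using of_real_minus_of_int_nonzero[OF assms, of "int i" for i]
  by (simp add: iscale_def prod_zero_iff)

lemma iscale_Suc: "iscale r (Suc n) = iscale r n * (if r \<in> \<int> then complex_of_real r - of_nat n else 1)"
  by (simp add: iscale_def)

lemma eN_left_rescale:
  assumes r: "r < 0" and p: "p \<ge> 1"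
  shows "eN 0 (complex_of_real r) (p - 1) / iscale r (nat (p - 1)) = (complex_of_real r - of_int p + 1) / iscale r (nat p)"
proof -
  have np: "nat p = Suc (nat (p - 1))" using p by simp
  have ip: "of_nat (nat (p - 1)) = (of_int p - 1 :: complex)" using p by (simp add: of_nat_nat)
  have nz: "iscale r (nat (p-1)) \<noteq> 0" by (rule iscale_nonzero[OF r])
  have nz2: "complex_of_real r - of_int p + 1 \<noteq> 0"
    using of_real_minus_of_int_nonzero[OF r, of "p - 1"] p by (simp add: algebra_simps)
  show ?thesis unfolding np iscale_Suc ip using nz nz2
    by (auto simp: eN_def negint_zero negint_real r field_simps)
qed

lemma eN_right_rescale:
  assumes a: "a < 0"
  shows "eN (complex_of_real a) 0 (- int (q + 1)) / iscale a (Suc q) = of_nat (Suc q) / iscale a q"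
proof -
  have nz: "iscale a q \<noteq> 0" by (rule iscale_nonzero[OF a])
  have nz2: "complex_of_real a - of_nat q \<noteq> 0"
    using of_real_minus_of_int_nonzero[OF a, of "int q"] by simp
  show ?thesis unfolding iscale_Suc using nz nz2
    by (auto simp: eN_def negint_zero negint_real a field_simps)
qed

lemma fN_left_rescale:
  assumes r: "r < 0" and p: "p \<ge> 0"
  shows "fN 0 (complex_of_real r) (p + 1) / iscale r (nat (p + 1)) = of_int (p + 1) / iscale r (nat p)"
proof -
  have np: "nat (p + 1) = Suc (nat p)" using p by simp
  have ip: "of_nat (nat p) = (of_int p :: complex)" using p by (simp add: of_nat_nat)
  have nz: "iscale r (nat p) \<noteq> 0" by (rule iscale_nonzero[OF r])
  have nz2: "complex_of_real r - of_int p \<noteq> 0"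
    using of_real_minus_of_int_nonzero[OF r p] .
  show ?thesis unfolding np iscale_Suc ip using nz nz2
    by (auto simp: fN_def negint_zero negint_real r field_simps)
qed

lemma fN_right_rescale:
  assumes a: "a < 0" and q: "q > 0"
  shows "fN (complex_of_real a) 0 (- int (q - 1)) / iscale a (q - 1) = (complex_of_real a - of_nat q + 1) / iscale a q"
proof -
  obtain q' where q': "q = Suc q'" using q by (cases q) auto
  have nz: "iscale a q' \<noteq> 0" by (rule iscale_nonzero[OF a])
  have nz2: "complex_of_real a - of_nat q' \<noteq> 0"
    using of_real_minus_of_int_nonzero[OF a, of "int q'"] by simp
  show ?thesis unfolding q' iscale_Suc using nz nz2
    by (auto simp: fN_def negint_zero negint_real a field_simps)
qed

lemma prod_eq_pochhammer:
  fixes x :: "'a :: comm_ring_1"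
  shows "(\<Prod>j=1..n. (of_nat j - 1 - x)) = pochhammer (-x) n"
proof (induction n)
  case (Suc n)
  have "(\<Prod>j=1..Suc n. (of_nat j - 1 - x)) = (\<Prod>j=1..n. (of_nat j - 1 - x)) * (of_nat (Suc n) - 1 - x)"
    by (simp add: prod.nat_ivl_Suc' mult.commute)
  then show ?case using Suc by (simp add: pochhammer_Suc algebra_simps)
qed simp

lemma prod_fact_div_pochhammer: "(\<Prod>j=1..n. (of_nat j + 0) / (of_nat j - 1 - cnj (complex_of_real r))) = complex_of_real (fact n / pochhammer (-r) n)"
proof (induction n)
  case 0 then show ?case by simp
next
  case (Suc n)
  have "(\<Prod>j=1..Suc n. (of_nat j + 0) / (of_nat j - 1 - cnj (complex_of_real r))) = (\<Prod>j=1..n. (of_nat j + 0) / (of_nat j - 1 - cnj (complex_of_real r))) * ((of_nat (Suc n) + 0) / (of_nat (Suc n) - 1 - cnj (complex_of_real r)))"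
    by (simp add: prod.nat_ivl_Suc' mult.commute)
  also have "\<dots> = complex_of_real (fact n / pochhammer (-r) n * (real (Suc n) / (real n - r)))"
    using Suc by simp
  also have "fact n / pochhammer (-r) n * (real (Suc n) / (real n - r)) = fact (Suc n) / pochhammer (-r) (Suc n)"
    by (simp add: pochhammer_Suc algebra_simps)
  finally show ?case .
qed

lemma norm_prod_sq: "cmod (\<Prod>i<n. (complex_of_real r - of_nat i))^2 = (pochhammer (-r) n)^2"
proof (induction n)
  case 0 then show ?case by simp
next
  case (Suc n)
  have "cmod (\<Prod>i<Suc n. (complex_of_real r - of_nat i)) = cmod (\<Prod>i<n. (complex_of_real r - of_nat i)) * cmod (complex_of_real r - of_nat n)"
    by (simp add: norm_mult)
  moreover have "cmod (complex_of_real r - of_nat n) = \<bar>r - real n\<bar>"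
    by (metis norm_of_real of_real_diff of_real_of_nat_eq)
  ultimately have "cmod (\<Prod>i<Suc n. (complex_of_real r - of_nat i))^2 = cmod (\<Prod>i<n. (complex_of_real r - of_nat i))^2 * (r - real n)^2"
    by (simp add: power_mult_distrib)
  then show ?case using Suc by (simp add: pochhammer_Suc power_mult_distrib power2_eq_square algebra_simps)
qed

lemma normsq_x_rescale:
  assumes r: "r < 0"
  shows "normsq_x 0 (complex_of_real r) (int n) = (cmod (iscale r n))^2 * gen_normsq r n"
proof (cases "n = 0")
  case True then show ?thesis by (simp add: normsq_x_def iscale_def gen_normsq_def)
next
  case False
  have pp: "pochhammer (-r) n > 0" using r by (simp add: pochhammer_pos)
  show ?thesis
  proof (cases "r \<in> \<int>")
    case True
    then have "negint (complex_of_real r)" using r by (simp add: negint_real)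
    moreover have "pochhammer (- complex_of_real r) n = complex_of_real (pochhammer (-r) n)"
      by (metis of_real_minus pochhammer_of_real)
    ultimately have "normsq_x 0 (complex_of_real r) (int n) = fact n * pochhammer (-r) n"
      using False by (simp add: normsq_x_def prod_eq_pochhammer[simplified])
    also have "\<dots> = (pochhammer (-r) n)^2 * gen_normsq r n" using pp by (simp add: gen_normsq_def power2_eq_square)
    finally show ?thesis using True by (simp add: iscale_def norm_prod_sq)
  next
    case False': False
    then have "\<not> negint (complex_of_real r)" by (simp add: negint_real)
    then show ?thesis using False False' by (simp add: normsq_x_def prod_fact_div_pochhammer[simplified] iscale_def gen_normsq_def)
  qed
qed

lemma normsq_y_rescale:
  assumes a: "a < 0"
  shows "normsq_y a n = (cmod (iscale a n))^2 * gen_normsq a n"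
proof -
  have pp: "pochhammer (-a) n > 0" using a by (simp add: pochhammer_pos)
  show ?thesis
  proof (cases "a \<in> \<int>")
    case True
    then have "normsq_y a n = fact n * pochhammer (-a) n" by (simp add: normsq_y_def prod_eq_pochhammer[simplified])
    also have "\<dots> = (pochhammer (-a) n)^2 * gen_normsq a n" using pp by (simp add: gen_normsq_def power2_eq_square)
    finally show ?thesis using True norm_prod_sq[of a n] by (simp add: iscale_def)
  next
    case False
    then show ?thesis by (simp add: normsq_y_def prod_eq_pochhammer[simplified] iscale_def gen_normsq_def)
  qed
qed

lemma rescale_in_Vspace_iff:
  assumes r: "r < 0" and a: "a < 0"
  shows "rescale r a u \<in> Vspace 0 (complex_of_real r) a \<longleftrightarrow> normsq_term r a u summable_on UNIV"
proof -
  have fs: "rescale r a u \<in> FS 0 (complex_of_real r)"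
    by (auto simp: FS_def Kset_0_neg[OF r] rescale_def)
  have eq: "(\<lambda>(k, l). (cmod (rescale r a u (k, l)))\<^sup>2 * normsq_x 0 (complex_of_real r) k * normsq_y a l) = normsq_term r a u"
  proof (intro ext, clarify)
    fix p :: int and q :: nat
    show "(cmod (rescale r a u (p, q)))\<^sup>2 * normsq_x 0 (complex_of_real r) p * normsq_y a q = normsq_term r a u (p,q)"
    proof (cases "p \<ge> 0")
      case True
      then have pe: "p = int (nat p)" by simp
      have nz: "iscale r (nat p) \<noteq> 0" "iscale a q \<noteq> 0" using iscale_nonzero[OF r] iscale_nonzero[OF a] by auto
      have "normsq_x 0 (complex_of_real r) p = (cmod (iscale r (nat p)))^2 * gen_normsq r (nat p)"
        by (subst pe) (rule normsq_x_rescale[OF r])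
      then show ?thesis using True nz
        by (simp add: rescale_def normsq_term_def normsq_y_rescale[OF a] norm_divide norm_mult power_divide power_mult_distrib field_simps)
    next
      case False then show ?thesis by (simp add: rescale_def normsq_term_def)
    qed
  qed
  show ?thesis using fs eq by (simp add: Vspace_def)
qed


lemma actV_E_rescale:
  assumes r: "r < 0" and a: "a < 0" and u0: "\<And>p q. p < 0 \<Longrightarrow> u (p,q) = 0"
  shows "actV E 0 (complex_of_real r) a (rescale r a u) = rescale r a (genE r u)"
proof (intro ext, clarify)
  fix p :: int and q :: nat
  show "actV E 0 (complex_of_real r) a (rescale r a u) (p,q) = rescale r a (genE r u) (p,q)"
  proof (cases "p \<ge> 0")
    case False
    then show ?thesis by (simp add: actV_def Kset_0_neg[OF r] rescale_def)
  next
    case True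
    have nz: "iscale r (nat p) \<noteq> 0" "iscale a q \<noteq> 0" "iscale a (Suc q) \<noteq> 0" using iscale_nonzero[OF r] iscale_nonzero[OF a] by auto
    have t1: "eN 0 (complex_of_real r) (p - 1) * rescale r a u (p - 1, q)
        = (complex_of_real r - of_int p + 1) * u (p-1, q) / (iscale r (nat p) * iscale a q)"
    proof (cases "p = 0")
      case True then show ?thesis using u0[of "-1" q] by (simp add: rescale_def)
    next
      case False
      then have p1: "p \<ge> 1" "p - 1 \<ge> 0" using True by auto
      have nz1: "iscale r (nat (p - 1)) \<noteq> 0" using iscale_nonzero[OF r] by auto
      have "eN 0 (complex_of_real r) (p - 1) * rescale r a u (p - 1, q)
          = (eN 0 (complex_of_real r) (p - 1) / iscale r (nat (p - 1))) * u (p-1,q) / iscale a q"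
        using p1 nz1 nz by (simp add: rescale_def)
      also have "\<dots> = (complex_of_real r - of_int p + 1) / iscale r (nat p) * u (p-1,q) / iscale a q"
        unfolding eN_left_rescale[OF r p1(1)] ..
      finally show ?thesis by simp
    qed
    have t2: "eN (complex_of_real a) 0 (- int (q + 1)) * rescale r a u (p, q + 1)
        = of_nat (Suc q) * u (p, Suc q) / (iscale r (nat p) * iscale a q)"
    proof -
      have "eN (complex_of_real a) 0 (- int (q + 1)) * rescale r a u (p, q + 1)
          = (eN (complex_of_real a) 0 (- int (q + 1)) / iscale a (Suc q)) * u (p, Suc q) / iscale r (nat p)"
        using True nz by (simp add: rescale_def)
      also have "\<dots> = of_nat (Suc q) / iscale a q * u (p, Suc q) / iscale r (nat p)"
        unfolding eN_right_rescale[OF a] ..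
      finally show ?thesis by simp
    qed
    have "actV E 0 (complex_of_real r) a (rescale r a u) (p,q)
        = eN 0 (complex_of_real r) (p - 1) * rescale r a u (p - 1, q) + eN (complex_of_real a) 0 (- int (q + 1)) * rescale r a u (p, q + 1)"
      using True by (simp add: actV_def Kset_0_neg[OF r])
    also have "\<dots> = rescale r a (genE r u) (p,q)"
      unfolding t1 t2 using True by (simp add: rescale_def genE_def add_divide_distrib)
    finally show ?thesis .
  qed
qed

lemma actV_F_rescale:
  assumes r: "r < 0" and a: "a < 0"
  shows "actV F 0 (complex_of_real r) a (rescale r a u) = rescale r a (genF a u)"
proof (intro ext, clarify)
  fix p :: int and q :: nat
  show "actV F 0 (complex_of_real r) a (rescale r a u) (p,q) = rescale r a (genF a u) (p,q)"
  proof (cases "p \<ge> 0")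
    case False
    then show ?thesis by (simp add: actV_def Kset_0_neg[OF r] rescale_def)
  next
    case True
    have nz: "iscale r (nat p) \<noteq> 0" "iscale a q \<noteq> 0" using iscale_nonzero[OF r] iscale_nonzero[OF a] by auto
    have t1: "fN 0 (complex_of_real r) (p + 1) * rescale r a u (p + 1, q)
        = of_int (p + 1) * u (p+1, q) / (iscale r (nat p) * iscale a q)"
    proof -
      have nz1: "iscale r (nat (p + 1)) \<noteq> 0" using iscale_nonzero[OF r] by auto
      have "fN 0 (complex_of_real r) (p + 1) * rescale r a u (p + 1, q)
          = (fN 0 (complex_of_real r) (p + 1) / iscale r (nat (p + 1))) * u (p+1,q) / iscale a q"
        using True nz1 nz by (simp add: rescale_def)
      also have "\<dots> = of_int (p + 1) / iscale r (nat p) * u (p+1,q) / iscale a q"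
        unfolding fN_left_rescale[OF r True] ..
      finally show ?thesis by simp
    qed
    have t2: "(if q > 0 then fN (complex_of_real a) 0 (- int (q - 1)) * rescale r a u (p, q - 1) else 0)
        = (if q > 0 then (complex_of_real a - of_nat q + 1) * u (p, q - 1) else 0) / (iscale r (nat p) * iscale a q)"
    proof (cases "q > 0")
      case True': True
      have nz1: "iscale a (q - 1) \<noteq> 0" using iscale_nonzero[OF a] by auto
      have "fN (complex_of_real a) 0 (- int (q - 1)) * rescale r a u (p, q - 1)
          = (fN (complex_of_real a) 0 (- int (q - 1)) / iscale a (q - 1)) * u (p, q - 1) / iscale r (nat p)"
        using True nz1 nz by (simp add: rescale_def)
      also have "\<dots> = (complex_of_real a - of_nat q + 1) / iscale a q * u (p, q - 1) / iscale r (nat p)"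
        unfolding fN_right_rescale[OF a True'] ..
      finally show ?thesis using True' by simp
    qed simp
    have "actV F 0 (complex_of_real r) a (rescale r a u) (p,q)
        = fN 0 (complex_of_real r) (p + 1) * rescale r a u (p + 1, q)
          + (if q > 0 then fN (complex_of_real a) 0 (- int (q - 1)) * rescale r a u (p, q - 1) else 0)"
      using True by (simp add: actV_def Kset_0_neg[OF r])
    also have "\<dots> = rescale r a (genF a u) (p,q)"
      unfolding t1 t2 using True by (simp add: rescale_def genF_def add_divide_distrib)
    finally show ?thesis .
  qed
qed

lemma actV_H_rescale:
  assumes r: "r < 0" and a: "a < 0"
  shows "actV H 0 (complex_of_real r) a (rescale r a u) = rescale r a (genH r a u)"
proof (intro ext, clarify)
  fix p :: int and q :: nat
  show "actV H 0 (complex_of_real r) a (rescale r a u) (p,q) = rescale r a (genH r a u) (p,q)"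
  proof (cases "p \<ge> 0")
    case True
    have hs: "hN 0 (complex_of_real r) p + hN (complex_of_real a) 0 (- int q) = - of_real r + 2 * of_int p + of_real a - 2 * of_nat q"
      by (simp add: hN_def algebra_simps)
    show ?thesis using True by (simp add: actV_def Kset_0_neg[OF r] rescale_def genH_def hs)
  qed (simp add: actV_def Kset_0_neg[OF r] rescale_def)
qed



lemma rescale_add: "rescale r a (\<lambda>x. u x + w x) = (\<lambda>x. rescale r a u x + rescale r a w x)"
  by (auto simp: rescale_def add_divide_distrib)

lemma rescale_scale: "rescale r a (\<lambda>x. c * u x) = (\<lambda>x. c * rescale r a u x)"
  by (auto simp: rescale_def)

lemma actN_E: "actN E c1 c2 v j = (if j \<in> Kset c1 c2 then eN c1 c2 (j - 1) * v (j - 1) else 0)"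
  by (simp add: actN_def)

lemma actN_F: "actN F c1 c2 v j = (if j \<in> Kset c1 c2 then fN c1 c2 (j + 1) * v (j + 1) else 0)"
  by (simp add: actN_def)

lemma actN_H: "actN H c1 c2 v j = (if j \<in> Kset c1 c2 then hN c1 c2 j * v j else 0)"
  by (simp add: actN_def)

section \<open>The embedding of N(0, c2) into V\<close>

locale lw_embedding =
  fixes r a :: real and m :: nat and c2 :: complex
  assumes r: "r < 0" and a: "a < 0" and lam: "a - r - 2 * real m > 0"
    and c2: "c2 = - complex_of_real (a - r - 2 * real m)"
begin

definition e_coeff :: "int \<Rightarrow> complex" where
  "e_coeff k = eN 0 c2 k"

definition norm_const :: "int \<Rightarrow> complex" where
  "norm_const k = 1 / (\<Prod>i<nat k. e_coeff (int i))"

text \<open>The image of x(k) (in generic coordinates) is E^k applied to the lowest weight vector, divided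
  by the product of the E-coefficients of N(0,c2), so that E acts on the images as on the x(k).\<close>

definition embed_basis :: "int \<Rightarrow> int \<times> nat \<Rightarrow> complex" where
  "embed_basis k = (\<lambda>x. if k \<ge> 0 then norm_const k * orbit r a m (nat k) x else 0)"

lemma Re_c2_neg: "Re c2 < 0" using c2 lam by simp

lemma e_coeff_nonzero: "k \<ge> 0 \<Longrightarrow> e_coeff k \<noteq> 0"
proof -
  assume k: "k \<ge> 0"
  show ?thesis
  proof (cases "negint c2")
    case True then show ?thesis by (simp add: e_coeff_def eN_def negint_zero)
  next
    case False
    have "Re (c2 - of_int k) < 0" using Re_c2_neg k by simp
    then have "c2 - of_int k \<noteq> 0" by auto
    then show ?thesis using False by (simp add: e_coeff_def eN_def negint_zero)
  qed
qed

lemma norm_const_nonzero: "norm_const k \<noteq> 0"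
  using e_coeff_nonzero by (simp add: norm_const_def prod_zero_iff)

lemma norm_const_rec: "k \<ge> 0 \<Longrightarrow> norm_const k = e_coeff k * norm_const (k + 1)"
proof -
  assume k: "k \<ge> 0"
  have n: "nat (k + 1) = Suc (nat k)" using k by simp
  have "(\<Prod>i<nat k. e_coeff (int i)) \<noteq> 0" using e_coeff_nonzero by (simp add: prod_zero_iff)
  then show ?thesis using e_coeff_nonzero[OF k] k unfolding norm_const_def n by (simp add: field_simps)
qed

lemma fN_eN: "k \<ge> 1 \<Longrightarrow> fN 0 c2 k * eN 0 c2 (k - 1) = of_int k * (c2 - of_int k + 1)"
  by (cases "negint c2") (simp_all add: fN_def eN_def negint_zero algebra_simps)

lemma embed_basis_neg: "p < 0 \<Longrightarrow> embed_basis k (p,q) = 0"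
  by (simp add: embed_basis_def orbit_neg)

lemma genE_embed_basis: "k \<ge> 0 \<Longrightarrow> genE r (embed_basis k) = (\<lambda>x. e_coeff k * embed_basis (k + 1) x)"
proof -
  assume k: "k \<ge> 0"
  have n: "nat (k + 1) = Suc (nat k)" using k by simp
  have "genE r (embed_basis k) = (\<lambda>x. norm_const k * orbit r a m (Suc (nat k)) x)"
    using k by (simp add: embed_basis_def genE_scale orbit_Suc)
  also have "\<dots> = (\<lambda>x. e_coeff k * embed_basis (k + 1) x)"
    using k by (simp add: embed_basis_def n norm_const_rec[OF k] mult.assoc)
  finally show ?thesis .
qed

lemma genF_embed_basis: "k \<ge> 0 \<Longrightarrow> genF a (embed_basis k) = (\<lambda>x. fN 0 c2 k * embed_basis (k - 1) x)"
proof -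
  assume k: "k \<ge> 0"
  show ?thesis
  proof (cases "k = 0")
    case True
    then show ?thesis using genF_orbit_0 by (simp add: embed_basis_def genF_scale)
  next
    case False
    then have k1: "k \<ge> 1" using k by simp
    have n: "nat k = Suc (nat (k - 1))" using k1 by simp
    have ik: "of_nat (nat (k - 1)) = (of_int k - 1 :: complex)" using k1 by (simp add: of_nat_nat)
    have "genF a (embed_basis k) = (\<lambda>x. norm_const k * (- (of_nat (Suc (nat (k-1))) * (complex_of_real (a - r - 2 * real m) + of_nat (nat (k-1))))) * orbit r a m (nat (k-1)) x)"
      using k unfolding embed_basis_def by (simp add: genF_scale n genF_orbit_Suc[of a r m] mult.assoc)
    also have "\<dots> = (\<lambda>x. fN 0 c2 k * embed_basis (k - 1) x)"
    proof
      fix x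
      have g: "norm_const (k - 1) = e_coeff (k - 1) * norm_const k" using norm_const_rec[of "k-1"] k1 by simp
      have "norm_const k * (- (of_nat (Suc (nat (k-1))) * (complex_of_real (a - r - 2 * real m) + of_nat (nat (k-1)))))
          = norm_const k * (of_int k * (c2 - of_int k + 1))"
        using k1 unfolding c2 ik by (simp add: of_nat_nat algebra_simps)
      also have "\<dots> = fN 0 c2 k * norm_const (k - 1)"
        unfolding g fN_eN[OF k1, symmetric] e_coeff_def by (simp add: algebra_simps)
      finally show "norm_const k * (- (of_nat (Suc (nat (k-1))) * (complex_of_real (a - r - 2 * real m) + of_nat (nat (k-1))))) * orbit r a m (nat (k-1)) x
          = fN 0 c2 k * embed_basis (k - 1) x"
        using k1 by (simp add: embed_basis_def)
    qed
    finally show ?thesis .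
  qed
qed

lemma genH_embed_basis: "genH r a (embed_basis k) = (\<lambda>x. hN 0 c2 k * embed_basis k x)"
proof (cases "k \<ge> 0")
  case True
  have h: "hN 0 c2 k = complex_of_real (a - r - 2 * real m) + 2 * of_nat (nat k)"
    using True by (simp add: hN_def c2 of_nat_nat)
  show ?thesis using True unfolding embed_basis_def h by (simp add: genH_scale genH_orbit ac_simps)
next
  case False
  then show ?thesis by (auto simp add: embed_basis_def genH_def)
qed

lemma embed_basis_support: "embed_basis k (p,q) \<noteq> 0 \<Longrightarrow> k \<ge> 0 \<and> int q = p + int m - k"
proof -
  assume nz: "embed_basis k (p,q) \<noteq> 0"
  then have k: "k \<ge> 0" by (simp add: embed_basis_def split: if_splits)
  obtain \<rho> where \<rho>: "\<And>p q. orbit r a m (nat k) (p,q) =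
     (if int q = p + int m - int (nat k) then (\<Sum>i\<le>nat k. \<rho> i * of_real (poch_frac (real m - a) (p - int i))) else 0)"
    using orbit_expansion[where r=r and k="nat k"] by blast
  show ?thesis using nz k by (auto simp: embed_basis_def \<rho> split: if_splits)
qed

lemma embed_basis_nonzero: "k \<ge> 0 \<Longrightarrow> \<exists>p q. p \<ge> 0 \<and> embed_basis k (p,q) \<noteq> 0"
proof -
  assume k: "k \<ge> 0"
  obtain p q where pq: "orbit r a m (nat k) (p,q) \<noteq> 0"
    using orbit_nonzero[OF lam, where k="nat k"] by blast
  then have "p \<ge> 0" using orbit_neg by force
  then show ?thesis using pq k norm_const_nonzero by (auto simp: embed_basis_def)
qed

lemma embed_basis_summable:
  assumes cond: "2 * real m + r - a < -1"
  shows "normsq_term r a (embed_basis k) summable_on UNIV"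
proof (cases "k \<ge> 0")
  case True
  have "normsq_term r a (orbit r a m (nat k)) summable_on UNIV"
    by (rule orbit_summable) (use a r cond in auto)
  then have "(\<lambda>x. (cmod (norm_const k))^2 * normsq_term r a (orbit r a m (nat k)) x) summable_on UNIV"
    by (rule summable_on_cmult_right)
  moreover have "normsq_term r a (embed_basis k) = (\<lambda>x. (cmod (norm_const k))^2 * normsq_term r a (orbit r a m (nat k)) x)"
    using True by (auto simp: normsq_term_def embed_basis_def norm_mult power_mult_distrib)
  ultimately show ?thesis by simp
next
  case False
  then have "normsq_term r a (embed_basis k) = (\<lambda>_. 0)" by (auto simp: normsq_term_def embed_basis_def)
  then show ?thesis by simp
qed

lemma Kset_c2: "Kset 0 c2 = {k. k \<ge> 0}"
  using Re_c2_neg by (auto simp: Kset_def)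

definition embed_raw :: "(int \<Rightarrow> complex) \<Rightarrow> int \<times> nat \<Rightarrow> complex" where
  "embed_raw v = (\<lambda>x. \<Sum>k\<in>{k. v k \<noteq> 0}. v k * embed_basis k x)"

definition embed :: "(int \<Rightarrow> complex) \<Rightarrow> int \<times> nat \<Rightarrow> complex" where
  "embed v = rescale r a (embed_raw v)"

lemma embed_raw_eq_sum:
  assumes "finite S" "{k. v k \<noteq> 0} \<subseteq> S"
  shows "embed_raw v = (\<lambda>x. \<Sum>k\<in>S. v k * embed_basis k x)"
  unfolding embed_raw_def
proof
  fix x
  show "(\<Sum>k\<in>{k. v k \<noteq> 0}. v k * embed_basis k x) = (\<Sum>k\<in>S. v k * embed_basis k x)"
    by (rule sum.mono_neutral_left) (use assms in auto)
qed

lemma embed_raw_neg: "p < 0 \<Longrightarrow> embed_raw v (p,q) = 0"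
  by (simp add: embed_raw_def embed_basis_neg)

lemma Nmod_finite_support: "v \<in> Nmod 0 c2 \<Longrightarrow> finite {k. v k \<noteq> 0}"
  by (simp add: Nmod_def)

lemma Nmod_support_nonneg: "v \<in> Nmod 0 c2 \<Longrightarrow> v k \<noteq> 0 \<Longrightarrow> k \<ge> 0"
  using Kset_c2 by (auto simp: Nmod_def)

lemma embed_in_Vspace:
  assumes cond: "2 * real m + r - a < -1" and v: "v \<in> Nmod 0 c2"
  shows "embed v \<in> Vspace 0 (complex_of_real r) a"
  unfolding embed_def rescale_in_Vspace_iff[OF r a] embed_raw_def
  by (rule normsq_term_sum_summable[OF r a Nmod_finite_support[OF v]]) (rule embed_basis_summable[OF cond])

lemma embed_add:
  assumes v: "v \<in> Nmod 0 c2" and w: "w \<in> Nmod 0 c2"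
  shows "embed (\<lambda>k. v k + w k) = (\<lambda>p. embed v p + embed w p)"
proof -
  define S where "S = {k. v k \<noteq> 0} \<union> {k. w k \<noteq> 0}"
  have fS: "finite S" using Nmod_finite_support[OF v] Nmod_finite_support[OF w] by (simp add: S_def)
  have "embed_raw (\<lambda>k. v k + w k) = (\<lambda>x. \<Sum>k\<in>S. (v k + w k) * embed_basis k x)"
    by (rule embed_raw_eq_sum[OF fS]) (auto simp: S_def)
  also have "\<dots> = (\<lambda>x. (\<Sum>k\<in>S. v k * embed_basis k x) + (\<Sum>k\<in>S. w k * embed_basis k x))"
    by (simp add: distrib_right sum.distrib)
  also have "\<dots> = (\<lambda>x. embed_raw v x + embed_raw w x)"
    using embed_raw_eq_sum[OF fS, of v] embed_raw_eq_sum[OF fS, of w] by (auto simp: S_def)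
  finally show ?thesis unfolding embed_def by (simp add: rescale_add)
qed

lemma embed_scale:
  assumes v: "v \<in> Nmod 0 c2"
  shows "embed (\<lambda>k. s * v k) = (\<lambda>p. s * embed v p)"
proof -
  define S where "S = {k. v k \<noteq> 0}"
  have fS: "finite S" using Nmod_finite_support[OF v] by (simp add: S_def)
  have "embed_raw (\<lambda>k. s * v k) = (\<lambda>x. \<Sum>k\<in>S. (s * v k) * embed_basis k x)"
    by (rule embed_raw_eq_sum[OF fS]) (auto simp: S_def)
  also have "\<dots> = (\<lambda>x. s * embed_raw v x)"
    using embed_raw_eq_sum[OF fS, of v] by (simp add: S_def sum_distrib_left mult.assoc)
  finally show ?thesis unfolding embed_def by (simp add: rescale_scale)
qed

lemma embed_raw_E:
  assumes v: "v \<in> Nmod 0 c2"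
  shows "embed_raw (actN E 0 c2 v) = genE r (embed_raw v)"
proof -
  define S where "S = {k. v k \<noteq> 0}"
  have fS: "finite S" using Nmod_finite_support[OF v] by (simp add: S_def)
  have S0: "\<And>k. k \<in> S \<Longrightarrow> k \<ge> 0" using Nmod_support_nonneg[OF v] by (auto simp: S_def)
  have inj: "inj_on (\<lambda>k. k + 1) S" by (auto simp: inj_on_def)
  have "embed_raw (actN E 0 c2 v) = (\<lambda>x. \<Sum>j\<in>(\<lambda>k. k + 1) ` S. actN E 0 c2 v j * embed_basis j x)"
  proof (rule embed_raw_eq_sum)
    show "finite ((\<lambda>k. k + 1) ` S)" using fS by simp
    show "{k. actN E 0 c2 v k \<noteq> 0} \<subseteq> (\<lambda>k. k + 1) ` S"
    proof
      fix j assume "j \<in> {k. actN E 0 c2 v k \<noteq> 0}"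
      then have "v (j - 1) \<noteq> 0" by (auto simp: actN_E split: if_splits)
      then have "j - 1 \<in> S" by (simp add: S_def)
      then show "j \<in> (\<lambda>k. k + 1) ` S" by (metis diff_add_cancel image_eqI)
    qed
  qed
  also have "\<dots> = (\<lambda>x. \<Sum>k\<in>S. actN E 0 c2 v (k + 1) * embed_basis (k + 1) x)"
    by (simp add: sum.reindex[OF inj])
  also have "\<dots> = (\<lambda>x. \<Sum>k\<in>S. v k * genE r (embed_basis k) x)"
  proof (intro ext sum.cong refl)
    fix x k assume k: "k \<in> S"
    then have "k + 1 \<in> Kset 0 c2" using S0 Kset_c2 by auto
    then show "actN E 0 c2 v (k + 1) * embed_basis (k + 1) x = v k * genE r (embed_basis k) x"
      using genE_embed_basis[OF S0[OF k]] by (simp add: actN_E e_coeff_def)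
  qed
  also have "\<dots> = genE r (embed_raw v)"
    unfolding embed_raw_eq_sum[OF fS, of v, simplified S_def, OF subset_refl] genE_sum[symmetric] S_def ..
  finally show ?thesis .
qed

lemma embed_raw_F:
  assumes v: "v \<in> Nmod 0 c2"
  shows "embed_raw (actN F 0 c2 v) = genF a (embed_raw v)"
proof -
  define S where "S = {k. v k \<noteq> 0}"
  have fS: "finite S" using Nmod_finite_support[OF v] by (simp add: S_def)
  have S0: "\<And>k. k \<in> S \<Longrightarrow> k \<ge> 0" using Nmod_support_nonneg[OF v] by (auto simp: S_def)
  have inj: "inj_on (\<lambda>k. k - 1) S" by (auto simp: inj_on_def)
  have "embed_raw (actN F 0 c2 v) = (\<lambda>x. \<Sum>j\<in>(\<lambda>k. k - 1) ` S. actN F 0 c2 v j * embed_basis j x)"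
  proof (rule embed_raw_eq_sum)
    show "finite ((\<lambda>k. k - 1) ` S)" using fS by simp
    show "{k. actN F 0 c2 v k \<noteq> 0} \<subseteq> (\<lambda>k. k - 1) ` S"
    proof
      fix j assume "j \<in> {k. actN F 0 c2 v k \<noteq> 0}"
      then have "v (j + 1) \<noteq> 0" by (auto simp: actN_F split: if_splits)
      then have "j + 1 \<in> S" by (simp add: S_def)
      then show "j \<in> (\<lambda>k. k - 1) ` S" by (metis add_diff_cancel image_eqI)
    qed
  qed
  also have "\<dots> = (\<lambda>x. \<Sum>k\<in>S. actN F 0 c2 v (k - 1) * embed_basis (k - 1) x)"
    by (simp add: sum.reindex[OF inj])
  also have "\<dots> = (\<lambda>x. \<Sum>k\<in>S. v k * genF a (embed_basis k) x)"
  proof (intro ext sum.cong refl)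
    fix x k assume k: "k \<in> S"
    show "actN F 0 c2 v (k - 1) * embed_basis (k - 1) x = v k * genF a (embed_basis k) x"
    proof (cases "k \<ge> 1")
      case True
      then have "k - 1 \<in> Kset 0 c2" using Kset_c2 by auto
      then show ?thesis using genF_embed_basis[OF S0[OF k]] by (simp add: actN_F)
    next
      case False
      then have k0: "k = 0" using S0[OF k] by simp
      have "embed_basis (-1) x = 0" by (simp add: embed_basis_def)
      then show ?thesis using genF_embed_basis[of 0] k0 by simp
    qed
  qed
  also have "\<dots> = genF a (embed_raw v)"
    unfolding embed_raw_eq_sum[OF fS, of v, simplified S_def, OF subset_refl] genF_sum[symmetric] S_def ..
  finally show ?thesis .
qed

lemma embed_raw_H:
  assumes v: "v \<in> Nmod 0 c2"
  shows "embed_raw (actN H 0 c2 v) = genH r a (embed_raw v)"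
proof -
  define S where "S = {k. v k \<noteq> 0}"
  have fS: "finite S" using Nmod_finite_support[OF v] by (simp add: S_def)
  have S0: "\<And>k. k \<in> S \<Longrightarrow> k \<ge> 0" using Nmod_support_nonneg[OF v] by (auto simp: S_def)
  have "embed_raw (actN H 0 c2 v) = (\<lambda>x. \<Sum>k\<in>S. actN H 0 c2 v k * embed_basis k x)"
    by (rule embed_raw_eq_sum[OF fS]) (auto simp: S_def actN_H split: if_splits)
  also have "\<dots> = (\<lambda>x. \<Sum>k\<in>S. v k * genH r a (embed_basis k) x)"
  proof (intro ext sum.cong refl)
    fix x k assume k: "k \<in> S"
    then have "k \<in> Kset 0 c2" using S0 Kset_c2 by auto
    then show "actN H 0 c2 v k * embed_basis k x = v k * genH r a (embed_basis k) x"
      by (simp add: actN_H genH_embed_basis)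
  qed
  also have "\<dots> = genH r a (embed_raw v)"
    unfolding embed_raw_eq_sum[OF fS, of v, simplified S_def, OF subset_refl] genH_sum[symmetric] S_def ..
  finally show ?thesis .
qed

lemma embed_act:
  assumes v: "v \<in> Nmod 0 c2"
  shows "embed (actN X 0 c2 v) = actV X 0 (complex_of_real r) a (embed v)"
proof (cases X)
  case H
  then show ?thesis unfolding embed_def using embed_raw_H[OF v] actV_H_rescale[OF r a] by simp
next
  case E
  then show ?thesis unfolding embed_def using embed_raw_E[OF v] actV_E_rescale[of r a "embed_raw v", OF r a embed_raw_neg] by simp
next
  case F
  then show ?thesis unfolding embed_def using embed_raw_F[OF v] actV_F_rescale[OF r a] by simp
qed

lemma embed_raw_at:
  assumes fS: "finite S" and sub: "{k. v k \<noteq> 0} \<subseteq> S" and k0: "k0 \<in> S"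
    and nz: "embed_basis k0 (p,q) \<noteq> 0"
  shows "embed_raw v (p,q) = v k0 * embed_basis k0 (p,q)"
proof -
  have "embed_raw v (p,q) = (\<Sum>k\<in>S. v k * embed_basis k (p,q))" using embed_raw_eq_sum[OF fS sub] by simp
  also have "\<dots> = v k0 * embed_basis k0 (p,q) + (\<Sum>k\<in>S - {k0}. v k * embed_basis k (p,q))"
    by (rule sum.remove[OF fS k0])
  also have "(\<Sum>k\<in>S - {k0}. v k * embed_basis k (p,q)) = 0"
  proof (rule sum.neutral, intro ballI)
    fix k assume k: "k \<in> S - {k0}"
    have "embed_basis k (p,q) = 0"
    proof (rule ccontr)
      assume "embed_basis k (p,q) \<noteq> 0"
      then have "int q = p + int m - k" using embed_basis_support by blast
      moreover have "int q = p + int m - k0" using embed_basis_support[OF nz] by blast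
      ultimately show False using k by auto
    qed
    then show "v k * embed_basis k (p,q) = 0" by simp
  qed
  finally show ?thesis by simp
qed

lemma embed_inj: "inj_on embed (Nmod 0 c2)"
proof (rule inj_onI)
  fix v w assume v: "v \<in> Nmod 0 c2" and w: "w \<in> Nmod 0 c2" and eq: "embed v = embed w"
  show "v = w"
  proof (rule ccontr)
    assume "v \<noteq> w"
    then obtain k0 where k0: "v k0 \<noteq> w k0" by auto
    define S where "S = {k. v k \<noteq> 0} \<union> {k. w k \<noteq> 0}"
    have fS: "finite S" using Nmod_finite_support[OF v] Nmod_finite_support[OF w] by (simp add: S_def)
    have kS: "k0 \<in> S" using k0 by (auto simp: S_def)
    have kpos: "k0 \<ge> 0" using kS Nmod_support_nonneg[OF v] Nmod_support_nonneg[OF w] by (auto simp: S_def)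
    obtain p q where pq: "p \<ge> 0" "embed_basis k0 (p,q) \<noteq> 0" using embed_basis_nonzero[OF kpos] by blast
    have "embed v (p,q) = embed w (p,q)" using eq by simp
    then have "embed_raw v (p,q) = embed_raw w (p,q)"
      using pq(1) iscale_nonzero[OF r] iscale_nonzero[OF a] by (simp add: embed_def rescale_def)
    then have "v k0 * embed_basis k0 (p,q) = w k0 * embed_basis k0 (p,q)"
      using embed_raw_at[OF fS _ kS pq(2), of v] embed_raw_at[OF fS _ kS pq(2), of w] by (auto simp: S_def)
    then show False using k0 pq(2) by simp
  qed
qed

lemma hilbert_submodule_embed:
  assumes cond: "2 * real m + r - a < -1"
  shows "hilbert_submodule 0 c2 0 (complex_of_real r) a"
  unfolding hilbert_submodule_def
  by (rule exI[of _ embed]) (use embed_in_Vspace[OF cond] embed_add embed_scale embed_act embed_inj in auto)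


end

section \<open>Lowest weight vectors in V\<close>

lemma genF_kernel_form:
  assumes F0: "\<And>p q. p \<ge> 0 \<Longrightarrow> genF a u (p,q) = 0"
  shows "u (int n, q) = (if n \<le> q then u (0, q - n) * complex_of_real (poch_frac (real (q - n) - a) (int n)) else 0)"
proof (induction n arbitrary: q)
  case (Suc n)
  have n1: "(of_int (int n + 1) :: complex) \<noteq> 0"
    by (metis of_nat_Suc of_int_of_nat_eq of_nat_eq_0_iff nat.distinct(1) add.commute of_int_add of_int_1)
  have F: "of_int (int n + 1) * u (int n + 1, q)
      + (if q > 0 then (of_real a - of_nat q + 1) * u (int n, q - 1) else 0) = 0"
    using F0[of "int n" q] by (simp add: genF_def)
  show ?case
  proof (cases q)
    case 0
    then show ?thesis using F n1 by (simp add: add.commute)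
  next
    case (Suc q')
    have F': "of_int (int n + 1) * u (int n + 1, Suc q') = (of_nat q' - of_real a) * u (int n, q')"
      using F Suc by (simp add: algebra_simps)
    show ?thesis
    proof (cases "n \<le> q'")
      case True
      define s where "s = real (q' - n) - a"
      have "of_int (int n + 1) * complex_of_real (poch_frac s (int n + 1))
          = (of_nat q' - of_real a) * complex_of_real (poch_frac s (int n))"
        using arg_cong[OF poch_frac_rec[of "int n + 1" s], of complex_of_real] True
        by (simp add: s_def of_nat_diff)
      moreover have "u (int n, q') = u (0, q' - n) * complex_of_real (poch_frac s (int n))"
        using Suc.IH[of q'] True unfolding s_def by simp
      ultimately have "of_int (int n + 1) * u (int n + 1, Suc q')
          = of_int (int n + 1) * (u (0, q' - n) * complex_of_real (poch_frac s (int n + 1)))"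
        unfolding F' by (metis mult.left_commute)
      then show ?thesis using n1 Suc True by (simp add: s_def add.commute)
    next
      case False
      then have "u (int n, q') = 0" using Suc.IH[of q'] by simp
      then show ?thesis using F' n1 Suc False by (simp add: add.commute)
    qed
  qed
qed simp

definition x_zero :: "int \<Rightarrow> complex" where
  "x_zero k = (if k = 0 then 1 else 0)"

lemma x_zero_in_Nmod: "x_zero \<in> Nmod 0 c2"
proof -
  have "{k. x_zero k \<noteq> 0} = {0}" by (auto simp: x_zero_def)
  then show ?thesis by (auto simp: Nmod_def Kset_def x_zero_def)
qed

lemma actN_F_x_zero: "actN F 0 c2 x_zero = (\<lambda>_. 0)"
proof
  fix j :: int
  have "-1 \<notin> Kset 0 c2" by (simp add: Kset_def)
  then show "actN F 0 c2 x_zero j = 0"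
    by (cases "j = -1") (auto simp: actN_F x_zero_def)
qed

lemma actN_H_x_zero: "actN H 0 c2 x_zero = (\<lambda>k. - c2 * x_zero k)"
proof
  fix j :: int
  have "0 \<in> Kset 0 c2" by (simp add: Kset_def)
  then show "actN H 0 c2 x_zero j = - c2 * x_zero j"
    by (cases "j = 0") (auto simp: actN_H x_zero_def hN_def)
qed

lemma hilbert_submodule_lowest_vector:
  assumes "hilbert_submodule 0 c2 a1 a2 a"
  shows "\<exists>u. u \<in> Vspace a1 a2 a \<and> (\<exists>x. u x \<noteq> 0) \<and> actV F a1 a2 a u = (\<lambda>_. 0)
           \<and> actV H a1 a2 a u = (\<lambda>x. (- c2) * u x)"
proof -
  obtain \<phi> where V: "\<forall>v \<in> Nmod 0 c2. \<phi> v \<in> Vspace a1 a2 a"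
    and sc: "\<forall>v \<in> Nmod 0 c2. \<forall>s. \<phi> (\<lambda>k. s * v k) = (\<lambda>p. s * \<phi> v p)"
    and act: "\<forall>X. \<forall>v \<in> Nmod 0 c2. \<phi> (actN X 0 c2 v) = actV X a1 a2 a (\<phi> v)"
    and inj: "inj_on \<phi> (Nmod 0 c2)"
    using assms unfolding hilbert_submodule_def by blast
  have x0: "x_zero \<in> Nmod 0 c2" by (rule x_zero_in_Nmod)
  have "\<phi> (\<lambda>k. 0 * x_zero k) = (\<lambda>p. 0 * \<phi> x_zero p)" using sc x0 by blast
  then have phi0: "\<phi> (\<lambda>_. 0) = (\<lambda>_. 0)" by simp
  have "\<phi> x_zero \<noteq> \<phi> (\<lambda>_. 0)"
    using inj x0 inj_onD[OF inj, of x_zero "\<lambda>_. 0"] fun_cong[of x_zero "\<lambda>_. 0" 0]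
    by (auto simp: Nmod_def x_zero_def)
  then have "\<exists>x. \<phi> x_zero x \<noteq> 0" using phi0 by auto
  moreover have "actV F a1 a2 a (\<phi> x_zero) = (\<lambda>_. 0)"
    using act x0 phi0 actN_F_x_zero by metis
  moreover have "actV H a1 a2 a (\<phi> x_zero) = (\<lambda>x. (- c2) * \<phi> x_zero x)"
    using act sc x0 actN_H_x_zero by metis
  ultimately show ?thesis using V x0 by blast
qed

lemma hilbert_submodule_weight:
  assumes "hilbert_submodule 0 (- lam) a1 a2 a"
  shows "\<exists>n0::int. lam = a1 + of_real a - a2 + 2 * of_int n0"
proof -
  obtain u where uV: "u \<in> Vspace a1 a2 a" and nz: "\<exists>x. u x \<noteq> 0"
    and uH: "actV H a1 a2 a u = (\<lambda>x. (- (- lam)) * u x)"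
    using hilbert_submodule_lowest_vector[OF assms] by blast
  obtain k l where kl: "u (k,l) \<noteq> 0" using nz by auto
  have kK: "k \<in> Kset a1 a2" using uV kl by (auto simp: Vspace_def FS_def)
  have "(hN a1 a2 k + hN (of_real a) 0 (- int l)) * u (k,l) = lam * u (k,l)"
    using fun_cong[OF uH, of "(k,l)"] kK by (simp add: actV_def)
  then have "hN a1 a2 k + hN (of_real a) 0 (- int l) = lam" using kl by simp
  then have "lam = a1 + of_real a - a2 + 2 * of_int (k - int l)"
    by (auto simp: hN_def algebra_simps)
  then show ?thesis by blast
qed

lemma no_hilbert_submodule_nonintegral:
  assumes a1: "a1 \<notin> \<int>" and a2: "a2 \<notin> \<int>"
  shows "\<not> hilbert_submodule 0 c2 a1 a2 a"
proof
  assume "hilbert_submodule 0 c2 a1 a2 a"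
  then obtain u where nz: "\<exists>x. u x \<noteq> 0" and uF: "actV F a1 a2 a u = (\<lambda>_. 0)"
    using hilbert_submodule_lowest_vector by blast
  have K: "Kset a1 a2 = UNIV" using a1 a2 by (auto simp: Kset_def)
  have ni: "\<not> negint a1" "\<not> negint a2" using a1 a2 by (auto simp: negint_def)
  have fnz: "fN a1 a2 k \<noteq> 0" for k
  proof
    assume "fN a1 a2 k = 0"
    then have "a1 = - of_int k" using ni by (simp add: fN_def add_eq_0_iff)
    then show False using a1 by (metis Ints_minus Ints_of_int)
  qed
  have F: "fN a1 a2 (k + 1) * u (k + 1, l) + (if l > 0 then fN (of_real a) 0 (- int (l - 1)) * u (k, l - 1) else 0) = 0" for k l
    using fun_cong[OF uF, of "(k,l)"] K by (simp add: actV_def)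
  have "\<forall>k. u (k, l) = 0" for l
  proof (induction l)
    case 0
    show ?case
    proof
      fix k
      show "u (k, 0) = 0" using F[of "k - 1" 0] fnz[of k] by simp
    qed
  next
    case (Suc l)
    show ?case
    proof
      fix k
      show "u (k, Suc l) = 0" using F[of "k - 1" "Suc l"] fnz[of k] Suc by simp
    qed
  qed
  then show False using nz by auto
qed



lemma rescale_surj:
  assumes r: "r < 0" and a: "a < 0" and u: "u \<in> FS 0 (complex_of_real r)"
  obtains U where "u = rescale r a U"
proof
  define U where "U = (\<lambda>(p,q). u (p,q) * (iscale r (nat p) * iscale a q))"
  have nz: "iscale r p * iscale a q \<noteq> 0" for p q
    using iscale_nonzero[OF r] iscale_nonzero[OF a] by simp
  show "u = rescale r a U"
  proof (intro ext, clarify)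
    fix p :: int and q :: nat
    show "u (p,q) = rescale r a U (p,q)"
    proof (cases "p \<ge> 0")
      case False
      then have "u (p,q) = 0" using u Kset_0_neg[OF r] by (simp add: FS_def)
      then show ?thesis using False by (simp add: rescale_def)
    qed (use nz in \<open>simp add: rescale_def U_def\<close>)
  qed
qed

lemma genF_kernel_single_column:
  assumes F0: "\<And>p q. p \<ge> 0 \<Longrightarrow> genF a u (p,q) = 0"
    and col: "\<And>j. u (0,j) \<noteq> 0 \<Longrightarrow> j = m" and p: "p \<ge> 0"
  shows "u (p,q) = u (0,m) * lw_vec a m (p,q)"
proof -
  obtain n where n: "p = int n" using p nonneg_int_cases by blast
  have kf: "u (int n, q) = (if n \<le> q then u (0, q - n) * complex_of_real (poch_frac (real (q - n) - a) (int n)) else 0)"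
    by (rule genF_kernel_form[OF F0])
  show ?thesis
  proof (cases "n \<le> q \<and> q - n = m")
    case True
    then have "real (q - n) = real m" "int q = p + int m" using n by auto
    then show ?thesis using kf n True by (simp add: lw_vec_def)
  next
    case False
    then have "u (int n, q) = 0" using kf col by auto
    moreover have "int q \<noteq> p + int m" using False n by auto
    ultimately show ?thesis using n by (simp add: lw_vec_def)
  qed
qed

lemma genF_kernel_eigenvector:
  assumes F0: "\<And>p q. p \<ge> 0 \<Longrightarrow> genF a U (p,q) = 0"
    and H0: "\<And>j. genH r a U (0,j) = (complex_of_real a - of_real r + 2 * of_int n0) * U (0,j)"
    and nz: "\<exists>p q. p \<ge> 0 \<and> U (p,q) \<noteq> 0"
  obtains m where "n0 = - int m" "U (0,m) \<noteq> 0" "\<And>p q. p \<ge> 0 \<Longrightarrow> U (p,q) = U (0,m) * lw_vec a m (p,q)"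
proof -
  have weight: "n0 = - int j" if "U (0,j) \<noteq> 0" for j
  proof -
    have "- complex_of_real r + of_real a - 2 * of_nat j = of_real a - of_real r + 2 * of_int n0"
      using H0[of j] that by (simp add: genH_def)
    then have "(of_int n0 :: complex) = of_int (- int j)" by simp
    then show ?thesis by (simp only: of_int_eq_iff)
  qed
  obtain j where j: "U (0,j) \<noteq> 0"
  proof (rule ccontr)
    assume "\<not> thesis"
    then have "U (0,j) = 0" for j using that by blast
    then have "U (p,q) = 0" if "p \<ge> 0" for p q
      using genF_kernel_single_column[OF F0 _ that, of 0 q] by auto
    then show False using nz by auto
  qed
  moreover have "j' = j" if "U (0,j') \<noteq> 0" for j'
    using weight[OF that] weight[OF j] by simp
  ultimately show ?thesis
    using that weight genF_kernel_single_column[OF F0] by blast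
qed

lemma hilbert_submodule_only_if:
  assumes r: "r < 0" and a: "a < 0"
    and hs: "hilbert_submodule 0 (- complex_of_real a + complex_of_real r - 2 * of_int n0) 0 (complex_of_real r) a"
  shows "1 + r - a < 2 * of_int n0 \<and> 2 * n0 \<le> 0"
proof -
  define lam where "lam = complex_of_real a - complex_of_real r + 2 * of_int n0"
  obtain u where uV: "u \<in> Vspace 0 (complex_of_real r) a" and nz: "\<exists>x. u x \<noteq> 0"
    and uF: "actV F 0 (complex_of_real r) a u = (\<lambda>_. 0)"
    and uH: "actV H 0 (complex_of_real r) a u = (\<lambda>x. lam * u x)"
    using hilbert_submodule_lowest_vector[OF hs] unfolding lam_def by (auto simp: algebra_simps)
  obtain U where uU: "u = rescale r a U"
    using rescale_surj[OF r a] uV by (auto simp: Vspace_def)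
  have nzs: "iscale r p * iscale a q \<noteq> 0" for p q
    using iscale_nonzero[OF r] iscale_nonzero[OF a] by simp
  have "genF a U (p,q) = 0" if "p \<ge> 0" for p q
  proof -
    have "rescale r a (genF a U) (p,q) = 0" using uF actV_F_rescale[OF r a] uU by simp
    then show ?thesis using that nzs[of "nat p" q] by (simp add: rescale_def)
  qed
  moreover have "genH r a U (0,j) = lam * U (0,j)" for j
  proof -
    have "rescale r a (genH r a U) (0,j) = lam * rescale r a U (0,j)"
      using fun_cong[OF uH, of "(0,j)"] actV_H_rescale[OF r a] uU by simp
    then show ?thesis using nzs[of 0 j] by (simp add: rescale_def)
  qed
  moreover have "\<exists>p q. p \<ge> 0 \<and> U (p,q) \<noteq> 0"
    using nz by (force simp: uU rescale_def split: if_splits)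
  ultimately obtain m where n0: "n0 = - int m" and c0: "U (0,m) \<noteq> 0"
    and form: "\<And>p q. p \<ge> 0 \<Longrightarrow> U (p,q) = U (0,m) * lw_vec a m (p,q)"
    using genF_kernel_eigenvector unfolding lam_def by metis
  define c where "c = U (0,m)"
  have "normsq_term r a U summable_on UNIV"
    using uV uU rescale_in_Vspace_iff[OF r a] by simp
  moreover have "normsq_term r a U = (\<lambda>x. (cmod c)^2 * normsq_term r a (lw_vec a m) x)"
    using form unfolding c_def[symmetric] by (auto simp: normsq_term_def norm_mult power_mult_distrib)
  ultimately have "normsq_term r a (lw_vec a m) summable_on UNIV"
    using c0 by (simp add: summable_on_cmult_right' c_def)
  then have "2 * real m + r - a < -1" by (rule lw_vec_summable_imp[OF a r])
  then show ?thesis using n0 by simp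
qed

lemma hilbert_submodule_if:
  assumes r: "r < 0" and a: "a < 0" and c1: "1 + r - a < 2 * of_int n0" and c2: "2 * n0 \<le> 0"
  shows "hilbert_submodule 0 (- complex_of_real a + complex_of_real r - 2 * of_int n0) 0 (complex_of_real r) a"
proof -
  define m where "m = nat (- n0)"
  have n0: "n0 = - int m" using c2 by (simp add: m_def)
  interpret lw_embedding r a m "- complex_of_real a + complex_of_real r - 2 * of_int n0"
    by unfold_locales (use r a c1 n0 in auto)
  show ?thesis by (rule hilbert_submodule_embed) (use c1 n0 in simp)
qed

lemma not_Ints_of_Re_between:
  fixes z :: complex
  assumes "-1 < Re z" "Re z < 0"
  shows "z \<notin> \<int>"
proof
  assume "z \<in> \<int>"
  then obtain i where "Re z = of_int i" by (auto simp: complex_is_Int_iff)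
  then have "-1 < i" "i < 0" using assms by simp_all
  then show False by simp
qed

theorem mainTheorem5:
  fixes a :: real and a1 a2 :: complex
  assumes ha: "a < 0"
    and hcases:
      "(a1 = 0 \<and> Im a2 = 0 \<and> Re a2 < 0)
       \<or> (\<exists>x y. -1 \<le> x \<and> x < 0 \<and> y > 0 \<and> a1 = Complex (-1 - x) y \<and> a2 = Complex x y)
       \<or> (Im a1 = 0 \<and> Im a2 = 0 \<and> -1 < Re a1 \<and> Re a1 < 0 \<and> -1 < Re a2 \<and> Re a2 < 0)"
  shows "(\<forall>lam::complex. hilbert_submodule 0 (- lam) a1 a2 a \<longrightarrow>
            (\<exists>n0::int. lam = a1 + of_real a - a2 + 2 * of_int n0))
       \<and> (a1 = 0 \<longrightarrow> (\<forall>n0::int.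
            hilbert_submodule 0 (- of_real a + a2 - 2 * of_int n0) a1 a2 a \<longleftrightarrow>
            (1 + Re a2 - a < 2 * of_int n0 \<and> 2 * n0 \<le> 0)))
       \<and> (a1 \<noteq> 0 \<longrightarrow> (\<forall>n0::int.
            \<not> hilbert_submodule 0 (- a1 - of_real a + a2 - 2 * of_int n0) a1 a2 a))"
proof (intro conjI impI allI)
  fix lam :: complex
  assume "hilbert_submodule 0 (- lam) a1 a2 a"
  then show "\<exists>n0::int. lam = a1 + of_real a - a2 + 2 * of_int n0" by (rule hilbert_submodule_weight)
next
  fix n0 :: int
  assume a1: "a1 = 0"
  then have a2: "a2 = complex_of_real (Re a2)" and r: "Re a2 < 0"
    using hcases by (auto simp: complex_eq_iff)
  show "hilbert_submodule 0 (- of_real a + a2 - 2 * of_int n0) a1 a2 a \<longleftrightarrow>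
      (1 + Re a2 - a < 2 * of_int n0 \<and> 2 * n0 \<le> 0)"
    unfolding a1 using hilbert_submodule_only_if[OF r ha] hilbert_submodule_if[OF r ha] a2 by auto
next
  fix n0 :: int
  assume "a1 \<noteq> 0"
  then have "a1 \<notin> \<int> \<and> a2 \<notin> \<int>"
    using hcases not_Ints_of_Re_between[of a1] not_Ints_of_Re_between[of a2]
    by (auto simp: complex_is_Int_iff)
  then show "\<not> hilbert_submodule 0 (- a1 - of_real a + a2 - 2 * of_int n0) a1 a2 a"
    by (intro no_hilbert_submodule_nonintegral) auto
qed

end
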